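(* Let $(\Xi,\mathcal{F},P)$ be a probability space and $\{y_t\}_{t\in\mathbb{Z}}$ a real, mean-zero, covariance-stationary series on it; put $\mathcal{F}_t=\sigma(y_s,\,s\le t)$. Assume (D1) $P\{y_1^2>0\}=1$; (D2) $y_t=\sum_{s=0}^{\infty}\kappa_s\epsilon_{t-s}$ with $\kappa_0=1$, $\sum_s|\kappa_s|<\infty$, $\kappa(z)=\sum_s\kappa_s z^s\neq 0$ for $|z|\le 1$, where $\{\epsilon_t\}$ is a martingale difference sequence with respect to $\{\mathcal{F}_t\}$; (D3) $E[\epsilon_t^2\mid\mathcal{F}_{t-1}]=\sigma_\epsilon^2$ a.s. (constant); (D4) $\sup_t|\epsilon_t|\le K<\infty$ a.s. Fix $\beta\in[0,1]$, let $\theta_t,\bar P_t,e_t,x_t,\phi_t,z_t$ be generated by the recursive algorithm described in the context, and assume there are random variables $k^*$ (integer, $0\le k^*<\infty$) and $K^*\in(0,1)$ such that a.s. $|\theta_{t+k^*}|\le K^*$ for all $t\ge1$. Then: (a) $\liminf_{t\to\infty}t^{-1}\sum_{s=1}^t\phi_s^2\ge\sigma_\epsilon^2$ a.s., and there is a random $K(\xi)<\infty$ a.s. with $(t^{-1}\sum_{s=1}^t\phi_s^2)^{-1}\le K(\xi)$ for all $t\ge1$; thus $\bar P_t^{-1}$ is bounded a.s. (b) For $t\ge1$, $e_t=\sum_{j=0}^\infty\kappa_j^e(t)\epsilon_{t-j}$, $\phi_t=\sum_{j=0}^\infty\kappa_j^\phi(t)\epsilon_{t-j}$, $x_t=\sum_{j=0}^\infty\kappa_j^x(t)\epsilon_{t-j}$,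 $z_t=\sum_{j=0}^\infty\kappa_j^z(t)\epsilon_{t-j}$, where for every $j$ the coefficients $\kappa_j^e(t),\kappa_j^\phi(t),\kappa_j^x(t),\kappa_j^z(t)$ are $\mathcal{F}_{t-1}$-measurable, and there exist (random) $\tilde\kappa_j$ with $\max\{|\kappa_j^e(t)|,|\kappa_j^\phi(t)|,|\kappa_j^x(t)|,|\kappa_j^z(t)|\}\le\tilde\kappa_j$ for all $t,j$ and $\sum_j\tilde\kappa_j<\infty$ a.s. Hence the sequences $e_t,\phi_t,x_t,z_t$ are uniformly bounded a.s. (c) $\theta_t-\theta_{t-1}\to0$ almost surely.
   Context: Recursive algorithm: set $\theta_1=0$, $\bar P_1=0$, $e_1=y_1$, $x_1=y_1$, $\phi_1=x_1$, $z_1=e_1$, and for $t\ge2$: $x_t=y_t-\beta\theta_{t-1}x_{t-1}$; $e_t=y_t-\theta_{t-1}e_{t-1}$; $\phi_t=x_t-\theta_{t-1}\phi_{t-1}$; $\bar P_t=\frac1t\sum_{s=1}^{t-1}\phi_s^2$; $\theta_t=\theta_{t-1}+\bar P_t^{-1}\frac1t\phi_{t-1}e_t$; $z_t=e_t+\theta_{t-1}\phi_{t-1}$. *)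

theory Defs
  imports "HOL-Probability.Probability"
begin

definition nat_filt :: "'a measure \<Rightarrow> (int \<Rightarrow> 'a \<Rightarrow> real) \<Rightarrow> int \<Rightarrow> 'a measure" where
  "nat_filt M y t = sigma (space M) (\<Union>s\<in>{..t}. {y s -` A \<inter> space M | A. A \<in> sets borel})"

text \<open>The recursive algorithm, run on a path Y (only Y 1, Y 2, ... are used).
  State at time t = n + 1 is (theta_t, e_t, x_t, phi_t, sum_{s=1}^t phi_s^2).\<close>
fun alg :: "real \<Rightarrow> (nat \<Rightarrow> real) \<Rightarrow> nat \<Rightarrow> real \<times> real \<times> real \<times> real \<times> real" where
  "alg \<beta> Y 0 = (0, Y 1, Y 1, Y 1, (Y 1)\<^sup>2)"
| "alg \<beta> Y (Suc n) =
     (let t = n + 2; (th, ep, xp, ph, S) = alg \<beta> Y n;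
          x = Y t - \<beta> * th * xp;
          e = Y t - th * ep;
          phi = x - th * ph;
          Pb = S / real t;
          th' = th + inverse Pb * (1 / real t) * ph * e
      in (th', e, x, phi, S + phi\<^sup>2))"

text \<open>Accessors for t >= 1 (index t refers to time t; values at t = 0 are unused).\<close>
definition alg_theta :: "real \<Rightarrow> (nat \<Rightarrow> real) \<Rightarrow> nat \<Rightarrow> real" where
  "alg_theta \<beta> Y t = fst (alg \<beta> Y (t - 1))"
definition alg_e :: "real \<Rightarrow> (nat \<Rightarrow> real) \<Rightarrow> nat \<Rightarrow> real" where
  "alg_e \<beta> Y t = fst (snd (alg \<beta> Y (t - 1)))"
definition alg_x :: "real \<Rightarrow> (nat \<Rightarrow> real) \<Rightarrow> nat \<Rightarrow> real" where
  "alg_x \<beta> Y t = fst (snd (snd (alg \<beta> Y (t - 1))))"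
definition alg_phi :: "real \<Rightarrow> (nat \<Rightarrow> real) \<Rightarrow> nat \<Rightarrow> real" where
  "alg_phi \<beta> Y t = fst (snd (snd (snd (alg \<beta> Y (t - 1)))))"
definition alg_Pbar :: "real \<Rightarrow> (nat \<Rightarrow> real) \<Rightarrow> nat \<Rightarrow> real" where
  "alg_Pbar \<beta> Y t = (1 / real t) * (\<Sum>s=1..<t. (alg_phi \<beta> Y s)\<^sup>2)"
definition alg_z :: "real \<Rightarrow> (nat \<Rightarrow> real) \<Rightarrow> nat \<Rightarrow> real" where
  "alg_z \<beta> Y t = (if t \<le> 1 then alg_e \<beta> Y t
                   else alg_e \<beta> Y t + alg_theta \<beta> Y (t - 1) * alg_phi \<beta> Y (t - 1))"

end

theory Submission
  imports Defs "HOL-Library.Discrete_Functions"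
begin

text \<open>Along a fixed path, e, x, \<phi> and z arise from y through time-varying linear filters whose
  gains are the \<theta>_s. Composing them with y_t = \<Sum>_j \<kappa>_j \<epsilon>_{t-j} expresses each of them as a series
  in the innovations whose coefficients are built from \<kappa> and the past gains, hence are
  F_{t-1}-measurable. Once |\<theta>_s| \<le> K* < 1 for s > k*, these coefficients are dominated by the
  twofold convolution of |\<kappa>| with the geometric sequence (K*)^j, a summable sequence, up to a
  random factor paying for the finitely many earlier gains; with |\<epsilon>| \<le> K this bounds all four
  processes (part (b)).

  The leading coefficient of \<phi>_t is \<kappa>_0 = 1, so \<phi>_t = \<epsilon>_t + w_t with w_t predictable and
  bounded. A strong law for bounded martingale differences (Chebyshev along the times n^2,
  Borel-Cantelli, and interpolation between consecutive squares) gives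
  t^{-1} \<Sum>_{s\<le>t} (\<epsilon>_s^2 - \<sigma>^2) \<rightarrow> 0 and t^{-1} \<Sum>_{s\<le>t} w_s \<epsilon>_s \<rightarrow> 0, whence
  liminf t^{-1} \<Sum>_{s\<le>t} \<phi>_s^2 \<ge> \<sigma>^2; and \<sigma> \<noteq> 0, since otherwise y_1 = 0 almost surely,
  contradicting (D1) (part (a)). Finally \<theta>_{t+1} - \<theta>_t = \<phi>_t e_{t+1} / \<Sum>_{s\<le>t} \<phi>_s^2 = O(1/t)
  (part (c)).\<close>

definition alg_sum_phi_sq :: "real \<Rightarrow> (nat \<Rightarrow> real) \<Rightarrow> nat \<Rightarrow> real" where
  "alg_sum_phi_sq \<beta> Y t = snd (snd (snd (snd (alg \<beta> Y (t - 1)))))"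

lemma alg_initial:
  "alg_theta \<beta> Y 0 = 0" "alg_theta \<beta> Y (Suc 0) = 0"
  "alg_e \<beta> Y (Suc 0) = Y 1" "alg_x \<beta> Y (Suc 0) = Y 1" "alg_phi \<beta> Y (Suc 0) = Y 1"
  "alg_sum_phi_sq \<beta> Y (Suc 0) = (Y 1)\<^sup>2"
  by (simp_all add: alg_theta_def alg_e_def alg_x_def alg_phi_def alg_sum_phi_sq_def)

lemma alg_step:
  "alg_e \<beta> Y (Suc (Suc n)) = Y (Suc (Suc n)) - alg_theta \<beta> Y (Suc n) * alg_e \<beta> Y (Suc n)"
  "alg_x \<beta> Y (Suc (Suc n)) = Y (Suc (Suc n)) - \<beta> * alg_theta \<beta> Y (Suc n) * alg_x \<beta> Y (Suc n)"
  "alg_phi \<beta> Y (Suc (Suc n)) = alg_x \<beta> Y (Suc (Suc n)) - alg_theta \<beta> Y (Suc n) * alg_phi \<beta> Y (Suc n)"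
  "alg_sum_phi_sq \<beta> Y (Suc (Suc n)) = alg_sum_phi_sq \<beta> Y (Suc n) + (alg_phi \<beta> Y (Suc (Suc n)))\<^sup>2"
  "alg_theta \<beta> Y (Suc (Suc n)) = alg_theta \<beta> Y (Suc n)
     + alg_phi \<beta> Y (Suc n) * alg_e \<beta> Y (Suc (Suc n)) / alg_sum_phi_sq \<beta> Y (Suc n)"
  by (simp_all add: alg_theta_def alg_e_def alg_x_def alg_phi_def alg_sum_phi_sq_def Let_def
      numeral_2_eq_2 field_simps split: prod.splits)

lemma alg_sum_phi_sq_eq_sum: "alg_sum_phi_sq \<beta> Y (Suc n) = (\<Sum>s=1..Suc n. (alg_phi \<beta> Y s)\<^sup>2)"
  by (induction n) (simp_all add: alg_initial alg_step)

lemma alg_theta_increment: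
  assumes "1 \<le> t"
  shows "alg_theta \<beta> Y (Suc t) - alg_theta \<beta> Y t
    = alg_phi \<beta> Y t * alg_e \<beta> Y (Suc t) / (\<Sum>s=1..t. (alg_phi \<beta> Y s)\<^sup>2)"
proof -
  obtain n where "t = Suc n" using assms by (cases t) auto
  then show ?thesis by (simp add: alg_step(5) alg_sum_phi_sq_eq_sum)
qed

section \<open>Moving-average representation\<close>

definition lag :: "(nat \<Rightarrow> real) \<Rightarrow> nat \<Rightarrow> real" where
  "lag f j = (case j of 0 \<Rightarrow> 0 | Suc i \<Rightarrow> f i)"

lemma lag_simps [simp]: "lag f 0 = 0" "lag f (Suc i) = f i"
  by (simp_all add: lag_def)

lemma sums_lag:
  assumes "(\<lambda>j. f j * u (int t - int j)) sums v"
  shows "(\<lambda>j. lag f j * u (int (Suc t) - int j)) sums v"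
  using assms sums_Suc_iff[of "\<lambda>j. lag f j * u (int (Suc t) - int j)" v] by simp

lemma sums_sub_lag:
  assumes "(\<lambda>j. f j * u (int t - int j)) sums v" and "(\<lambda>j. g j * u (int (Suc t) - int j)) sums w"
  shows "(\<lambda>j. (g j - c * lag f j) * u (int (Suc t) - int j)) sums (w - c * v)"
  using sums_diff[OF assms(2) sums_mult[OF sums_lag[OF assms(1)], of c]]
  by (simp add: algebra_simps)

text \<open>The coefficients of \<epsilon>_{n+1-j} in the representations at time n + 1, given the gains th;
  those of e are \<open>coeff_x 1\<close>, those of x are \<open>coeff_x \<beta>\<close>.\<close>

fun coeff_x :: "real \<Rightarrow> (nat \<Rightarrow> real) \<Rightarrow> (nat \<Rightarrow> real) \<Rightarrow> nat \<Rightarrow> nat \<Rightarrow> real" where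
  "coeff_x b k th 0 = k"
| "coeff_x b k th (Suc n) = (\<lambda>j. k j - b * th (Suc n) * lag (coeff_x b k th n) j)"

fun coeff_phi :: "real \<Rightarrow> (nat \<Rightarrow> real) \<Rightarrow> (nat \<Rightarrow> real) \<Rightarrow> nat \<Rightarrow> nat \<Rightarrow> real" where
  "coeff_phi b k th 0 = k"
| "coeff_phi b k th (Suc n) = (\<lambda>j. coeff_x b k th (Suc n) j - th (Suc n) * lag (coeff_phi b k th n) j)"

fun coeff_z :: "real \<Rightarrow> (nat \<Rightarrow> real) \<Rightarrow> (nat \<Rightarrow> real) \<Rightarrow> nat \<Rightarrow> nat \<Rightarrow> real" where
  "coeff_z b k th 0 = k"
| "coeff_z b k th (Suc n) = (\<lambda>j. coeff_x 1 k th (Suc n) j + th (Suc n) * lag (coeff_phi b k th n) j)"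

lemma coeff_phi_0: "coeff_phi b k th n 0 = k 0"
  by (cases n) simp_all

lemma alg_ma_representation:
  assumes ma: "\<And>t. (\<lambda>s. k s * u (int t - int s)) sums Y t"
  shows "(\<lambda>j. coeff_x 1 k (alg_theta b Y) n j * u (int (Suc n) - int j)) sums alg_e b Y (Suc n)"
    and "(\<lambda>j. coeff_x b k (alg_theta b Y) n j * u (int (Suc n) - int j)) sums alg_x b Y (Suc n)"
    and "(\<lambda>j. coeff_phi b k (alg_theta b Y) n j * u (int (Suc n) - int j)) sums alg_phi b Y (Suc n)"
    and "(\<lambda>j. coeff_z b k (alg_theta b Y) n j * u (int (Suc n) - int j)) sums alg_z b Y (Suc n)"
proof -
  show e: "(\<lambda>j. coeff_x 1 k (alg_theta b Y) n j * u (int (Suc n) - int j)) sums alg_e b Y (Suc n)" for n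
  proof (induction n)
    case (Suc n)
    show ?case
      using sums_sub_lag[OF Suc ma, of "alg_theta b Y (Suc n)"] by (simp add: alg_step)
  qed (use ma[of 1] in \<open>simp add: alg_initial\<close>)
  show x: "(\<lambda>j. coeff_x b k (alg_theta b Y) n j * u (int (Suc n) - int j)) sums alg_x b Y (Suc n)" for n
  proof (induction n)
    case (Suc n)
    show ?case
      using sums_sub_lag[OF Suc ma, of "b * alg_theta b Y (Suc n)"] by (simp add: alg_step mult.assoc)
  qed (use ma[of 1] in \<open>simp add: alg_initial\<close>)
  show phi: "(\<lambda>j. coeff_phi b k (alg_theta b Y) n j * u (int (Suc n) - int j)) sums alg_phi b Y (Suc n)" for n
  proof (induction n)
    case (Suc n)
    show ?case
      using sums_sub_lag[OF Suc x, of "alg_theta b Y (Suc n)"] by (simp add: alg_step)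
  qed (use ma[of 1] in \<open>simp add: alg_initial\<close>)
  show "(\<lambda>j. coeff_z b k (alg_theta b Y) n j * u (int (Suc n) - int j)) sums alg_z b Y (Suc n)"
  proof (cases n)
    case 0
    then show ?thesis using ma[of 1] by (simp add: alg_z_def alg_initial)
  next
    case (Suc m)
    show ?thesis
      using sums_sub_lag[OF phi e, of m "- alg_theta b Y (Suc m)"] Suc by (simp add: alg_z_def)
  qed
qed

section \<open>Summable majorants of the coefficients\<close>

definition geom_conv :: "real \<Rightarrow> (nat \<Rightarrow> real) \<Rightarrow> nat \<Rightarrow> real" where
  "geom_conv r a j = (\<Sum>i\<le>j. a i * r ^ (j - i))"

lemma geom_conv_0 [simp]: "geom_conv r a 0 = a 0"
  by (simp add: geom_conv_def)

lemma geom_conv_Suc [simp]: "geom_conv r a (Suc j) = a (Suc j) + r * geom_conv r a j"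
  by (simp add: geom_conv_def sum_distrib_left Suc_diff_le mult_ac)

lemma geom_conv_nonneg: "(\<And>i. 0 \<le> a i) \<Longrightarrow> 0 \<le> r \<Longrightarrow> 0 \<le> geom_conv r a j"
  by (simp add: geom_conv_def sum_nonneg)

lemma geom_conv_ge: "(\<And>i. 0 \<le> a i) \<Longrightarrow> 0 \<le> r \<Longrightarrow> a j \<le> geom_conv r a j"
  by (cases j) (simp_all add: geom_conv_nonneg)

lemma summable_geom_conv:
  assumes "summable (\<lambda>i. \<bar>a i\<bar>)" and "\<bar>r\<bar> < 1"
  shows "summable (geom_conv r a)"
  unfolding geom_conv_def
  using summable_Cauchy_product[of a "\<lambda>i. r ^ i"] assms by (simp add: power_abs summable_geometric)

lemma abs_sub_mult_le:
  fixes u c v g G W W' r :: real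
  assumes "\<bar>u\<bar> \<le> W' * g" "\<bar>v\<bar> \<le> W * G" "\<bar>c\<bar> * W \<le> r * W'" "0 \<le> G"
  shows "\<bar>u - c * v\<bar> \<le> W' * (g + r * G)"
proof -
  have "\<bar>c\<bar> * \<bar>v\<bar> \<le> \<bar>c\<bar> * (W * G)"
    using assms(2) by (intro mult_left_mono) auto
  also have "\<dots> \<le> r * W' * G"
    using assms(3,4) by (metis mult.assoc mult_right_mono)
  finally show ?thesis
    using assms(1) abs_triangle_ineq4[of u "c * v"] by (simp add: abs_mult algebra_simps)
qed

text \<open>Only the gains after time m are bounded by r; each of the at most m earlier ones may cost an
  extra factor C, which the weight \<open>C ^ min n m\<close> keeps track of.\<close>

context
  fixes th :: "nat \<Rightarrow> real" and r C :: real and m :: nat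
  assumes r_pos: "0 < r" and C_ge_1: "1 \<le> C"
    and theta_le: "\<And>s. \<bar>th s\<bar> \<le> C * r" and theta_le_tail: "\<And>s. m < s \<Longrightarrow> \<bar>th s\<bar> \<le> r"
begin

lemma weight_ge_1: "1 \<le> C ^ min n m"
  using C_ge_1 by simp

lemma weight_nonneg: "0 \<le> C ^ min n m"
  using C_ge_1 by simp

lemma weight_le: "C ^ min n m \<le> C ^ m"
  using C_ge_1 by (simp add: power_increasing)

lemma theta_weight_step: "\<bar>th (Suc n)\<bar> * C ^ min n m \<le> r * C ^ min (Suc n) m"
proof (cases "n < m")
  case True
  have "\<bar>th (Suc n)\<bar> * C ^ min n m \<le> C * r * C ^ min n m"
    by (rule mult_right_mono[OF theta_le weight_nonneg])
  also have "\<dots> = r * C ^ min (Suc n) m"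
    using True by (simp add: min_def)
  finally show ?thesis .
next
  case False
  then have "min (Suc n) m = m" "min n m = m"
    by auto
  then show ?thesis
    using mult_right_mono[OF theta_le_tail[of "Suc n"] weight_nonneg[of n]] False by simp
qed

lemma theta_weight_sq_step: "\<bar>th (Suc n)\<bar> * (C ^ min n m)\<^sup>2 \<le> r * (C ^ min (Suc n) m)\<^sup>2"
proof -
  have "C ^ min n m \<le> C ^ min (Suc n) m"
    using C_ge_1 by (simp add: power_increasing)
  then have "\<bar>th (Suc n)\<bar> * C ^ min n m * C ^ min n m \<le> r * C ^ min (Suc n) m * C ^ min (Suc n) m"
    using weight_nonneg r_pos by (intro mult_mono[OF theta_weight_step[of n]]) simp_all
  then show ?thesis by (simp add: power2_eq_square mult.assoc)
qed

lemma le_weight_mult: "0 \<le> a \<Longrightarrow> a \<le> C ^ min n m * a"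
  using mult_right_mono[OF weight_ge_1] by simp

lemma abs_coeff_x_le:
  assumes b: "\<bar>b\<bar> \<le> 1"
  shows "\<bar>coeff_x b k th n j\<bar> \<le> C ^ min n m * geom_conv r (\<lambda>i. \<bar>k i\<bar>) j"
proof (induction n arbitrary: j)
  case 0
  show ?case using geom_conv_ge[of "\<lambda>i. \<bar>k i\<bar>" r j] r_pos by simp
next
  case (Suc n)
  show ?case
  proof (cases j)
    case 0
    then show ?thesis using le_weight_mult[of "\<bar>k 0\<bar>" "Suc n"] by simp
  next
    case (Suc i)
    have "\<bar>b * th (Suc n)\<bar> * C ^ min n m \<le> \<bar>th (Suc n)\<bar> * C ^ min n m"
      using b weight_nonneg by (simp add: abs_mult mult_left_le_one_le mult_right_mono)
    also have "\<dots> \<le> r * C ^ min (Suc n) m"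
      by (rule theta_weight_step)
    finally have "\<bar>k (Suc i) - b * th (Suc n) * coeff_x b k th n i\<bar>
        \<le> C ^ min (Suc n) m * (\<bar>k (Suc i)\<bar> + r * geom_conv r (\<lambda>i. \<bar>k i\<bar>) i)"
      using le_weight_mult[of "\<bar>k (Suc i)\<bar>" "Suc n"] Suc.IH r_pos
      by (intro abs_sub_mult_le geom_conv_nonneg) simp_all
    then show ?thesis using Suc by simp
  qed
qed

lemma abs_sub_lag_le:
  assumes u: "\<bar>u\<bar> \<le> C ^ min (Suc n) m * geom_conv r (\<lambda>i. \<bar>k i\<bar>) j"
    and v: "\<And>i. \<bar>v i\<bar> \<le> (C ^ min n m)\<^sup>2 * geom_conv r (geom_conv r (\<lambda>i. \<bar>k i\<bar>)) i"
    and c: "\<bar>c\<bar> = \<bar>th (Suc n)\<bar>"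
  shows "\<bar>u - c * lag v j\<bar> \<le> (C ^ min (Suc n) m)\<^sup>2 * geom_conv r (geom_conv r (\<lambda>i. \<bar>k i\<bar>)) j"
proof -
  have G_nonneg: "0 \<le> geom_conv r (\<lambda>i. \<bar>k i\<bar>) i" for i
    using r_pos by (simp add: geom_conv_nonneg)
  have u': "\<bar>u\<bar> \<le> (C ^ min (Suc n) m)\<^sup>2 * geom_conv r (\<lambda>i. \<bar>k i\<bar>) j"
    using u le_weight_mult[OF mult_nonneg_nonneg[OF weight_nonneg G_nonneg], of "Suc n" j "Suc n"]
    by (simp add: power2_eq_square mult.assoc)
  show ?thesis
  proof (cases j)
    case 0
    then show ?thesis using u' by simp
  next
    case (Suc i)
    have "\<bar>u - c * v i\<bar> \<le> (C ^ min (Suc n) m)\<^sup>2 * (geom_conv r (\<lambda>i. \<bar>k i\<bar>) j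
        + r * geom_conv r (geom_conv r (\<lambda>i. \<bar>k i\<bar>)) i)"
      using u' v theta_weight_sq_step[of n] c r_pos G_nonneg
      by (intro abs_sub_mult_le geom_conv_nonneg) simp_all
    then show ?thesis using Suc by simp
  qed
qed

lemma abs_coeff_phi_le:
  assumes b: "\<bar>b\<bar> \<le> 1"
  shows "\<bar>coeff_phi b k th n j\<bar> \<le> (C ^ min n m)\<^sup>2 * geom_conv r (geom_conv r (\<lambda>i. \<bar>k i\<bar>)) j"
proof (induction n arbitrary: j)
  case 0
  show ?case
    using geom_conv_ge[of "\<lambda>i. \<bar>k i\<bar>" r j] geom_conv_ge[of "geom_conv r (\<lambda>i. \<bar>k i\<bar>)" r j] r_pos
    by (simp add: geom_conv_nonneg)
next
  case (Suc n)
  show ?case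
    using abs_sub_lag_le[OF abs_coeff_x_le[OF b] Suc.IH] by simp
qed

lemma abs_coeff_z_le:
  assumes b: "\<bar>b\<bar> \<le> 1"
  shows "\<bar>coeff_z b k th n j\<bar> \<le> (C ^ min n m)\<^sup>2 * geom_conv r (geom_conv r (\<lambda>i. \<bar>k i\<bar>)) j"
proof (cases n)
  case 0
  then show ?thesis using abs_coeff_phi_le[OF b, of k 0 j] by simp
next
  case (Suc n')
  have "\<bar>1::real\<bar> \<le> 1" by simp
  from abs_sub_lag_le[OF abs_coeff_x_le[OF this] abs_coeff_phi_le[OF b], of "- th (Suc n')"]
  show ?thesis using Suc by simp
qed

lemma abs_coeffs_le_uniform:
  fixes k :: "nat \<Rightarrow> real"
  assumes b: "\<bar>b\<bar> \<le> 1"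
  defines "H \<equiv> \<lambda>j. (C ^ m)\<^sup>2 * geom_conv r (geom_conv r (\<lambda>i. \<bar>k i\<bar>)) j"
  shows "\<bar>coeff_x b k th n j\<bar> \<le> H j" "\<bar>coeff_phi b k th n j\<bar> \<le> H j" "\<bar>coeff_z b k th n j\<bar> \<le> H j"
proof -
  have G_le_H: "geom_conv r (\<lambda>i. \<bar>k i\<bar>) j \<le> geom_conv r (geom_conv r (\<lambda>i. \<bar>k i\<bar>)) j"
    using r_pos by (intro geom_conv_ge geom_conv_nonneg) simp_all
  have G_nonneg: "0 \<le> geom_conv r (\<lambda>i. \<bar>k i\<bar>) j"
    using r_pos by (simp add: geom_conv_nonneg)
  have sq_weight_le: "(C ^ min n m)\<^sup>2 \<le> (C ^ m)\<^sup>2"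
    by (rule power_mono[OF weight_le weight_nonneg])
  have weight_le_sq: "C ^ min n m \<le> (C ^ min n m)\<^sup>2"
    using le_weight_mult[OF weight_nonneg, of n n] by (simp add: power2_eq_square)
  have H_nonneg: "0 \<le> geom_conv r (geom_conv r (\<lambda>i. \<bar>k i\<bar>)) j"
    using r_pos by (intro geom_conv_nonneg) simp_all
  show "\<bar>coeff_x b k th n j\<bar> \<le> H j"
    using abs_coeff_x_le[OF b, of k n j] mult_mono[OF order_trans[OF weight_le_sq sq_weight_le] G_le_H _ G_nonneg]
    unfolding H_def by simp
  show "\<bar>coeff_phi b k th n j\<bar> \<le> H j"
    using abs_coeff_phi_le[OF b, of k n j] mult_right_mono[OF sq_weight_le H_nonneg]
    unfolding H_def by simp
  show "\<bar>coeff_z b k th n j\<bar> \<le> H j"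
    using abs_coeff_z_le[OF b, of k n j] mult_right_mono[OF sq_weight_le H_nonneg]
    unfolding H_def by simp
qed

end

lemma tail_bound_imp_scaled_bound:
  fixes th :: "nat \<Rightarrow> real"
  assumes r: "0 < r" and tail: "\<forall>t\<ge>1. \<bar>th (t + m)\<bar> \<le> r"
  obtains C where "1 \<le> C" "\<And>s. \<bar>th s\<bar> \<le> C * r" "\<And>s. m < s \<Longrightarrow> \<bar>th s\<bar> \<le> r"
proof
  define \<Theta> where "\<Theta> = Max ((\<lambda>s. \<bar>th s\<bar>) ` {..m})"
  define C where "C = max 1 (\<Theta> / r)"
  show tail': "\<bar>th s\<bar> \<le> r" if "m < s" for s
    using tail[rule_format, of "s - m"] that by simp
  show C_ge_1: "1 \<le> C" by (simp add: C_def)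
  show "\<bar>th s\<bar> \<le> C * r" for s
  proof (cases "s \<le> m")
    case True
    then have "\<bar>th s\<bar> \<le> \<Theta>"
      unfolding \<Theta>_def by (intro Max_ge) auto
    also have "\<dots> = \<Theta> / r * r" using r by simp
    also have "\<dots> \<le> C * r"
      unfolding C_def using r by (intro mult_right_mono) simp_all
    finally show ?thesis .
  next
    case False
    then show ?thesis
      using tail'[of s] mult_right_mono[OF C_ge_1 less_imp_le[OF r]] by simp
  qed
qed

lemma coeffs_summable_majorant:
  assumes r: "0 < r" "r < 1" and tail: "\<forall>t\<ge>1. \<bar>th (t + m)\<bar> \<le> r"
    and b: "\<bar>b\<bar> \<le> 1" and k: "summable (\<lambda>i. \<bar>k i\<bar>)"
  obtains H where "summable H"
    and "\<And>n j. \<bar>coeff_x 1 k th n j\<bar> \<le> H j" "\<And>n j. \<bar>coeff_x b k th n j\<bar> \<le> H j"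
    and "\<And>n j. \<bar>coeff_phi b k th n j\<bar> \<le> H j" "\<And>n j. \<bar>coeff_z b k th n j\<bar> \<le> H j"
proof -
  obtain C where C: "1 \<le> C" "\<And>s. \<bar>th s\<bar> \<le> C * r" "\<And>s. m < s \<Longrightarrow> \<bar>th s\<bar> \<le> r"
    using tail_bound_imp_scaled_bound[OF r(1) tail] by blast
  have "\<bar>1::real\<bar> \<le> 1" by simp
  note bounds = abs_coeffs_le_uniform[OF r(1) C this] abs_coeffs_le_uniform[OF r(1) C b]
  have "summable (geom_conv r (\<lambda>i. \<bar>k i\<bar>))"
    using k r by (intro summable_geom_conv) simp_all
  then have "summable (geom_conv r (geom_conv r (\<lambda>i. \<bar>k i\<bar>)))"
    using r by (intro summable_geom_conv) (simp_all add: geom_conv_nonneg)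
  then show ?thesis
    by (rule that[OF summable_mult[where c = "(C ^ m)\<^sup>2"]]) (use bounds in simp)+
qed

lemma alg_measurable:
  assumes Y: "\<And>s. s \<le> Suc n \<Longrightarrow> (\<lambda>\<omega>. Y \<omega> s) \<in> borel_measurable N"
  shows "(\<lambda>\<omega>. alg b (Y \<omega>) n) \<in> N \<rightarrow>\<^sub>M borel \<Otimes>\<^sub>M borel \<Otimes>\<^sub>M borel \<Otimes>\<^sub>M borel \<Otimes>\<^sub>M borel"
  using Y
proof (induction n)
  case 0
  have [measurable]: "(\<lambda>\<omega>. Y \<omega> (Suc 0)) \<in> borel_measurable N" using 0 by simp
  show ?case by simp
next
  case (Suc n)
  have [measurable]: "(\<lambda>\<omega>. alg b (Y \<omega>) n) \<in> N \<rightarrow>\<^sub>M borel \<Otimes>\<^sub>M borel \<Otimes>\<^sub>M borel \<Otimes>\<^sub>M borel \<Otimes>\<^sub>M borel"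
    using Suc by simp
  have [measurable]: "(\<lambda>\<omega>. Y \<omega> (n + 2)) \<in> borel_measurable N" using Suc by simp
  show ?case unfolding alg.simps Let_def case_prod_beta by measurable
qed

lemma alg_accessors_measurable:
  assumes Y: "\<And>s. s \<le> Suc n \<Longrightarrow> (\<lambda>\<omega>. Y \<omega> s) \<in> borel_measurable N"
  shows "(\<lambda>\<omega>. alg_theta b (Y \<omega>) (Suc n)) \<in> borel_measurable N"
    and "(\<lambda>\<omega>. alg_phi b (Y \<omega>) (Suc n)) \<in> borel_measurable N"
  using alg_measurable[OF Y] unfolding alg_theta_def alg_phi_def by measurable

lemma lag_measurable:
  "(\<And>i. (\<lambda>\<omega>. f \<omega> i) \<in> borel_measurable N) \<Longrightarrow> (\<lambda>\<omega>. lag (f \<omega>) j) \<in> borel_measurable N"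
  by (cases j) simp_all

lemma coeff_x_measurable:
  assumes "\<And>s. 1 \<le> s \<Longrightarrow> s \<le> n \<Longrightarrow> (\<lambda>\<omega>. th \<omega> s) \<in> borel_measurable N"
  shows "(\<lambda>\<omega>. coeff_x b k (th \<omega>) n j) \<in> borel_measurable N"
  using assms
proof (induction n arbitrary: j)
  case (Suc n)
  have [measurable]: "(\<lambda>\<omega>. th \<omega> (Suc n)) \<in> borel_measurable N"
    using Suc.prems by simp
  have [measurable]: "(\<lambda>\<omega>. lag (coeff_x b k (th \<omega>) n) j) \<in> borel_measurable N"
    using Suc by (intro lag_measurable) simp
  show ?case by simp
qed simp

lemma coeff_phi_measurable:
  assumes "\<And>s. 1 \<le> s \<Longrightarrow> s \<le> n \<Longrightarrow> (\<lambda>\<omega>. th \<omega> s) \<in> borel_measurable N"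
  shows "(\<lambda>\<omega>. coeff_phi b k (th \<omega>) n j) \<in> borel_measurable N"
  using assms
proof (induction n arbitrary: j)
  case (Suc n)
  have [measurable]: "(\<lambda>\<omega>. th \<omega> (Suc n)) \<in> borel_measurable N"
    using Suc.prems by simp
  have [measurable]: "(\<lambda>\<omega>. lag (coeff_phi b k (th \<omega>) n) j) \<in> borel_measurable N"
    using Suc by (intro lag_measurable) simp
  have [measurable]: "(\<lambda>\<omega>. coeff_x b k (th \<omega>) (Suc n) j) \<in> borel_measurable N"
    using Suc.prems by (rule coeff_x_measurable)
  show ?case by (simp del: coeff_x.simps)
qed simp

lemma coeff_z_measurable:
  assumes th: "\<And>s. 1 \<le> s \<Longrightarrow> s \<le> n \<Longrightarrow> (\<lambda>\<omega>. th \<omega> s) \<in> borel_measurable N"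
  shows "(\<lambda>\<omega>. coeff_z b k (th \<omega>) n j) \<in> borel_measurable N"
proof (cases n)
  case (Suc n')
  have [measurable]: "(\<lambda>\<omega>. th \<omega> (Suc n')) \<in> borel_measurable N"
    using Suc by (intro th) simp_all
  have [measurable]: "(\<lambda>\<omega>. lag (coeff_phi b k (th \<omega>) n') j) \<in> borel_measurable N"
    using th Suc by (intro lag_measurable coeff_phi_measurable) simp
  have [measurable]: "(\<lambda>\<omega>. coeff_x 1 k (th \<omega>) (Suc n') j) \<in> borel_measurable N"
    using th Suc by (intro coeff_x_measurable) simp
  show ?thesis using Suc by (simp del: coeff_x.simps)
qed simp

lemmas coeffs_measurable = coeff_x_measurable coeff_phi_measurable coeff_z_measurable

lemma space_nat_filt [simp]: "space (nat_filt M y t) = space M"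
  unfolding nat_filt_def by (simp add: space_measure_of_conv)

lemma sets_nat_filt:
  "sets (nat_filt M y t) = sigma_sets (space M) (\<Union>s\<in>{..t}. {y s -` A \<inter> space M | A. A \<in> sets borel})"
  unfolding nat_filt_def by (rule sets_measure_of) auto

lemma subalgebra_nat_filt_mono: "s \<le> t \<Longrightarrow> subalgebra (nat_filt M y t) (nat_filt M y s)"
  unfolding subalgebra_def sets_nat_filt by (intro conjI sigma_sets_subseteq UN_mono) auto

lemma subalgebra_nat_filt:
  assumes "\<And>s. y s \<in> borel_measurable M"
  shows "subalgebra M (nat_filt M y t)"
proof -
  have "(\<Union>s\<in>{..t}. {y s -` A \<inter> space M | A. A \<in> sets borel}) \<subseteq> sets M"
    using assms by (auto simp: measurable_def)
  then show ?thesis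
    unfolding subalgebra_def sets_nat_filt using sets.sigma_sets_subset by auto
qed

lemma measurable_nat_filt: "s \<le> t \<Longrightarrow> y s \<in> borel_measurable (nat_filt M y t)"
  by (rule measurableI) (auto simp: sets_nat_filt)

section \<open>A strong law for bounded martingale differences\<close>

lemma abs_diff_le_of_increments:
  fixes S :: "nat \<Rightarrow> real"
  assumes inc: "\<And>t. \<bar>S (Suc t) - S t\<bar> \<le> C" and "m \<le> t"
  shows "\<bar>S t - S m\<bar> \<le> C * (real t - real m)"
  using \<open>m \<le> t\<close>
proof (induction t rule: dec_induct)
  case (step t)
  have "\<bar>S (Suc t) - S m\<bar> \<le> \<bar>S (Suc t) - S t\<bar> + \<bar>S t - S m\<bar>" by linarith
  also have "\<dots> \<le> C + C * (real t - real m)" using inc[of t] step.IH by linarith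
  finally show ?case by (simp add: algebra_simps)
qed simp

lemma filterlim_floor_sqrt: "filterlim floor_sqrt sequentially sequentially"
  unfolding filterlim_at_top eventually_sequentially
  by (metis le_floor_sqrtI)

lemma tendsto_avg_of_tendsto_along_squares:
  fixes S :: "nat \<Rightarrow> real"
  assumes inc: "\<And>t. \<bar>S (Suc t) - S t\<bar> \<le> C"
    and sq: "(\<lambda>n. S (n\<^sup>2) / real (n\<^sup>2)) \<longlonglongrightarrow> 0"
  shows "(\<lambda>t. S t / real t) \<longlonglongrightarrow> 0"
proof (rule Lim_null_comparison)
  define q where "q = floor_sqrt"
  have "(\<lambda>t. \<bar>S ((q t)\<^sup>2) / real ((q t)\<^sup>2)\<bar> + 2 * C / real (q t)) \<longlonglongrightarrow> 0 + 0"
    unfolding q_def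
    by (intro tendsto_add tendsto_rabs_zero filterlim_compose[OF sq filterlim_floor_sqrt]
        filterlim_compose[OF lim_const_over_n filterlim_floor_sqrt])
  then show "(\<lambda>t. \<bar>S ((q t)\<^sup>2) / real ((q t)\<^sup>2)\<bar> + 2 * C / real (q t)) \<longlonglongrightarrow> 0"
    by simp
  show "\<forall>\<^sub>F t in sequentially. norm (S t / real t) \<le> \<bar>S ((q t)\<^sup>2) / real ((q t)\<^sup>2)\<bar> + 2 * C / real (q t)"
    unfolding eventually_sequentially
  proof (intro exI allI impI)
    fix t :: nat assume "1 \<le> t"
    have C_nonneg: "0 \<le> C" using inc[of 0] by linarith
    have q_pos: "0 < q t" unfolding q_def using \<open>1 \<le> t\<close> le_floor_sqrtI[of 1 t] by simp
    have sq_le: "(q t)\<^sup>2 \<le> t" unfolding q_def by simp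
    have "t < (Suc (q t))\<^sup>2" unfolding q_def by (rule Suc_floor_sqrt_power2_gt)
    then have gap: "real t - real ((q t)\<^sup>2) \<le> 2 * real (q t)"
      by (simp add: power2_eq_square algebra_simps flip: of_nat_mult of_nat_add)
    have S_le: "\<bar>S t\<bar> \<le> \<bar>S ((q t)\<^sup>2)\<bar> + C * (2 * real (q t))"
      using abs_diff_le_of_increments[of S C, OF inc sq_le] mult_left_mono[OF gap C_nonneg] by linarith
    have "\<bar>S t\<bar> / real t \<le> \<bar>S ((q t)\<^sup>2)\<bar> / real t + C * (2 * real (q t)) / real t"
      using divide_right_mono[OF S_le, of "real t"] by (simp add: add_divide_distrib)
    also have "\<dots> \<le> \<bar>S ((q t)\<^sup>2)\<bar> / real ((q t)\<^sup>2) + C * (2 * real (q t)) / real ((q t)\<^sup>2)"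
      using sq_le q_pos C_nonneg \<open>1 \<le> t\<close>
      by (intro add_mono divide_left_mono) (simp_all add: of_nat_le_iff[symmetric] del: of_nat_le_iff)
    also have "\<dots> = \<bar>S ((q t)\<^sup>2) / real ((q t)\<^sup>2)\<bar> + 2 * C / real (q t)"
      using q_pos by (simp add: power2_eq_square)
    finally show "norm (S t / real t) \<le> \<bar>S ((q t)\<^sup>2) / real ((q t)\<^sup>2)\<bar> + 2 * C / real (q t)"
      by simp
  qed
qed

lemma tendsto_zero_of_eventually_le_inverse_Suc:
  fixes f :: "nat \<Rightarrow> real"
  assumes "\<And>m. eventually (\<lambda>n. \<bar>f n\<bar> \<le> inverse (real (Suc m))) sequentially"
  shows "f \<longlonglongrightarrow> 0"
proof (rule tendstoI)
  fix r :: real assume "0 < r"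
  then obtain m where "inverse (real (Suc m)) < r" using reals_Archimedean by blast
  with assms[of m] show "eventually (\<lambda>n. dist (f n) 0 < r) sequentially"
    by (auto elim: eventually_mono)
qed

lemma liminf_avg_sq_ge:
  fixes a w :: "nat \<Rightarrow> real"
  assumes sq: "(\<lambda>t. (\<Sum>s=1..t. (a s)\<^sup>2 - \<sigma>) / real t) \<longlonglongrightarrow> 0"
    and cross: "(\<lambda>t. (\<Sum>s=1..t. w s * a s) / real t) \<longlonglongrightarrow> 0"
  shows "ereal \<sigma> \<le> Liminf sequentially (\<lambda>t. ereal (1 / real t * (\<Sum>s=1..t. (a s + w s)\<^sup>2)))"
proof -
  define lower where
    "lower t = (\<Sum>s=1..t. (a s)\<^sup>2 - \<sigma>) / real t + \<sigma> + 2 * ((\<Sum>s=1..t. w s * a s) / real t)" for t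
  have "lower \<longlonglongrightarrow> 0 + \<sigma> + 2 * 0"
    unfolding lower_def by (intro tendsto_intros sq cross)
  then have lim: "(\<lambda>t. ereal (lower t)) \<longlonglongrightarrow> ereal \<sigma>"
    by (simp add: tendsto_ereal)
  have "ereal \<sigma> = Liminf sequentially (\<lambda>t. ereal (lower t))"
    using lim_imp_Liminf[OF _ lim] by simp
  also have "\<dots> \<le> Liminf sequentially (\<lambda>t. ereal (1 / real t * (\<Sum>s=1..t. (a s + w s)\<^sup>2)))"
  proof (intro Liminf_mono eventually_sequentiallyI)
    fix t :: nat assume "1 \<le> t"
    have "lower t = 1 / real t * (\<Sum>s=1..t. (a s)\<^sup>2 + 2 * (w s * a s))"
      using \<open>1 \<le> t\<close> by (simp add: lower_def sum_subtractf sum.distrib sum_distrib_left field_simps)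
    also have "\<dots> \<le> 1 / real t * (\<Sum>s=1..t. (a s + w s)\<^sup>2)"
      by (intro mult_left_mono sum_mono) (simp_all add: power2_eq_square algebra_simps)
    finally show "ereal (lower t) \<le> ereal (1 / real t * (\<Sum>s=1..t. (a s + w s)\<^sup>2))"
      by simp
  qed
  finally show ?thesis .
qed

lemma power2_le_if_abs_le: "\<bar>a\<bar> \<le> (b::real) \<Longrightarrow> a\<^sup>2 \<le> b\<^sup>2"
  by (metis abs_ge_zero order_trans power2_abs power_mono)

lemma (in prob_space) sigma_finite_subalgebra_if_subalgebra:
  "subalgebra M N \<Longrightarrow> sigma_finite_subalgebra M N"
  by (rule finite_measure_subalgebra_is_sigma_finite)
    (simp add: finite_measure_subalgebra_def finite_measure_subalgebra_axioms_def finite_measure_axioms)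

locale filtered_prob_space = prob_space M for M :: "'a measure" +
  fixes G :: "nat \<Rightarrow> 'a measure"
  assumes subalgebra_G: "\<And>n. subalgebra M (G n)"
    and subalgebra_G_mono: "\<And>m n. m \<le> n \<Longrightarrow> subalgebra (G n) (G m)"
begin

lemma sigma_finite_subalgebra_G: "sigma_finite_subalgebra M (G n)"
  by (rule sigma_finite_subalgebra_if_subalgebra[OF subalgebra_G])

lemma measurable_G: "f \<in> borel_measurable (G n) \<Longrightarrow> f \<in> borel_measurable M"
  using measurable_from_subalg[OF subalgebra_G] by blast

lemma measurable_G_mono: "f \<in> borel_measurable (G m) \<Longrightarrow> m \<le> n \<Longrightarrow> f \<in> borel_measurable (G n)"
  using measurable_from_subalg[OF subalgebra_G_mono] by blast

context
  fixes d :: "nat \<Rightarrow> 'a \<Rightarrow> real" and C :: real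
  assumes d_adapted: "\<And>n. 1 \<le> n \<Longrightarrow> d n \<in> borel_measurable (G n)"
    and d_bounded: "\<And>n. AE \<omega> in M. \<bar>d n \<omega>\<bar> \<le> C"
    and d_mds: "\<And>n. AE \<omega> in M. real_cond_exp M (G n) (d (Suc n)) \<omega> = 0"
begin

lemma mds_partial_sum_bounded: "AE \<omega> in M. \<bar>\<Sum>s=1..t. d s \<omega>\<bar> \<le> real t * C"
proof -
  have "AE \<omega> in M. \<forall>n. \<bar>d n \<omega>\<bar> \<le> C"
    using d_bounded by (simp add: AE_all_countable)
  then show ?thesis
  proof eventually_elim
    case (elim \<omega>)
    have "\<bar>\<Sum>s=1..t. d s \<omega>\<bar> \<le> (\<Sum>s=1..t. C)"
      using elim by (intro order_trans[OF sum_abs sum_mono]) auto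
    then show ?case by simp
  qed
qed

lemma mds_partial_sum_measurable: "(\<lambda>\<omega>. \<Sum>s=1..t. d s \<omega>) \<in> borel_measurable (G t)"
  using measurable_G_mono[OF d_adapted] by (intro borel_measurable_sum) auto

lemma C_nonneg: "0 \<le> C"
proof -
  have "AE \<omega> in M. 0 \<le> C"
    using d_bounded[of 0] by eventually_elim linarith
  then show ?thesis by simp
qed

lemma mds_partial_sum_sq_integrable: "integrable M (\<lambda>\<omega>. (\<Sum>s=1..t. d s \<omega>)\<^sup>2)"
proof (rule integrable_const_bound[where B = "(real t * C)\<^sup>2"])
  show "AE \<omega> in M. norm ((\<Sum>s=1..t. d s \<omega>)\<^sup>2) \<le> (real t * C)\<^sup>2"
    using mds_partial_sum_bounded[of t] by eventually_elim (simp add: power2_le_if_abs_le)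
qed (use measurable_G[OF mds_partial_sum_measurable] in measurable)

lemma mds_cross_term_integrable: "integrable M (\<lambda>\<omega>. (\<Sum>s=1..t. d s \<omega>) * d (Suc t) \<omega>)"
proof (rule integrable_const_bound[where B = "real t * C * C"])
  show "AE \<omega> in M. norm ((\<Sum>s=1..t. d s \<omega>) * d (Suc t) \<omega>) \<le> real t * C * C"
    using mds_partial_sum_bounded[of t] d_bounded[of "Suc t"]
    by eventually_elim (use C_nonneg in \<open>simp add: abs_mult mult_mono\<close>)
  have "d (Suc t) \<in> borel_measurable M"
    using measurable_G[OF d_adapted] by simp
  then show "(\<lambda>\<omega>. (\<Sum>s=1..t. d s \<omega>) * d (Suc t) \<omega>) \<in> borel_measurable M"
    using measurable_G[OF mds_partial_sum_measurable] by measurable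
qed

lemma mds_orthogonal_increment: "(\<integral>\<omega>. (\<Sum>s=1..t. d s \<omega>) * d (Suc t) \<omega> \<partial>M) = 0"
proof -
  interpret sigma_finite_subalgebra M "G t" by (rule sigma_finite_subalgebra_G)
  note S_G = mds_partial_sum_measurable[of t]
  have "d (Suc t) \<in> borel_measurable M"
    using measurable_G[OF d_adapted] by simp
  then have "(\<integral>\<omega>. (\<Sum>s=1..t. d s \<omega>) * d (Suc t) \<omega> \<partial>M)
      = (\<integral>\<omega>. (\<Sum>s=1..t. d s \<omega>) * real_cond_exp M (G t) (d (Suc t)) \<omega> \<partial>M)"
    using real_cond_exp_intg(2)[OF mds_cross_term_integrable S_G] by simp
  also have "\<dots> = (\<integral>\<omega>. 0 \<partial>M)"
    using d_mds[of t] measurable_G[OF S_G] by (intro integral_cong_AE) (auto elim!: eventually_mono)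
  finally show ?thesis by simp
qed

lemma mds_partial_sum_sq_integral_le: "(\<integral>\<omega>. (\<Sum>s=1..t. d s \<omega>)\<^sup>2 \<partial>M) \<le> real t * C\<^sup>2"
proof (induction t)
  case (Suc t)
  have [measurable]: "d (Suc t) \<in> borel_measurable M"
    using measurable_G[OF d_adapted] by simp
  have int_d_sq: "integrable M (\<lambda>\<omega>. (d (Suc t) \<omega>)\<^sup>2)"
  proof (rule integrable_const_bound[where B = "C\<^sup>2"])
    show "AE \<omega> in M. norm ((d (Suc t) \<omega>)\<^sup>2) \<le> C\<^sup>2"
      using d_bounded[of "Suc t"] by eventually_elim (simp add: power2_le_if_abs_le)
  qed measurable
  have "(\<integral>\<omega>. (d (Suc t) \<omega>)\<^sup>2 \<partial>M) \<le> (\<integral>\<omega>. C\<^sup>2 \<partial>M)"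
    using d_bounded[of "Suc t"]
    by (intro integral_mono_AE int_d_sq) (auto simp: power2_le_if_abs_le elim!: eventually_mono)
  then have E_d_sq: "(\<integral>\<omega>. (d (Suc t) \<omega>)\<^sup>2 \<partial>M) \<le> C\<^sup>2"
    by (simp add: prob_space)
  have "(\<Sum>s=1..Suc t. d s \<omega>)\<^sup>2
      = (\<Sum>s=1..t. d s \<omega>)\<^sup>2 + 2 * ((\<Sum>s=1..t. d s \<omega>) * d (Suc t) \<omega>) + (d (Suc t) \<omega>)\<^sup>2" for \<omega>
    by (simp add: power2_eq_square algebra_simps)
  then have "(\<integral>\<omega>. (\<Sum>s=1..Suc t. d s \<omega>)\<^sup>2 \<partial>M)
      = (\<integral>\<omega>. (\<Sum>s=1..t. d s \<omega>)\<^sup>2 \<partial>M) + 2 * (\<integral>\<omega>. (\<Sum>s=1..t. d s \<omega>) * d (Suc t) \<omega> \<partial>M)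
        + (\<integral>\<omega>. (d (Suc t) \<omega>)\<^sup>2 \<partial>M)"
    using mds_partial_sum_sq_integrable mds_cross_term_integrable int_d_sq by simp
  then show ?case
    using Suc.IH mds_orthogonal_increment[of t] E_d_sq by (simp add: algebra_simps)
qed simp

lemma mds_chebyshev_along_squares:
  assumes "0 < \<epsilon>" and "1 \<le> n"
  shows "measure M {\<omega> \<in> space M. (\<epsilon> * real (n\<^sup>2))\<^sup>2 \<le> (\<Sum>s=1..n\<^sup>2. d s \<omega>)\<^sup>2}
    \<le> C\<^sup>2 / \<epsilon>\<^sup>2 * inverse (real n ^ 2)"
proof -
  have c_pos: "0 < (\<epsilon> * real (n\<^sup>2))\<^sup>2" using assms by simp
  have "measure M {\<omega> \<in> space M. (\<epsilon> * real (n\<^sup>2))\<^sup>2 \<le> (\<Sum>s=1..n\<^sup>2. d s \<omega>)\<^sup>2}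
      \<le> (\<integral>\<omega>. (\<Sum>s=1..n\<^sup>2. d s \<omega>)\<^sup>2 \<partial>M) / (\<epsilon> * real (n\<^sup>2))\<^sup>2"
    by (rule integral_Markov_inequality_measure[OF mds_partial_sum_sq_integrable sets.top _ c_pos]) simp
  also have "\<dots> \<le> real (n\<^sup>2) * C\<^sup>2 / (\<epsilon> * real (n\<^sup>2))\<^sup>2"
    using mds_partial_sum_sq_integral_le[of "n\<^sup>2"] c_pos by (intro divide_right_mono) auto
  also have "\<dots> = C\<^sup>2 / \<epsilon>\<^sup>2 * inverse (real n ^ 2)"
    using assms by (simp add: field_simps power2_eq_square)
  finally show ?thesis .
qed

lemma mds_avg_along_squares:
  "AE \<omega> in M. (\<lambda>n. (\<Sum>s=1..n\<^sup>2. d s \<omega>) / real (n\<^sup>2)) \<longlonglongrightarrow> 0"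
proof -
  define S where "S t \<omega> = (\<Sum>s=1..t. d s \<omega>)" for t \<omega>
  have [measurable]: "S t \<in> borel_measurable M" for t
    unfolding S_def using measurable_G[OF mds_partial_sum_measurable] .
  have "AE \<omega> in M. eventually (\<lambda>n. \<bar>S (n\<^sup>2) \<omega> / real (n\<^sup>2)\<bar> \<le> \<epsilon>) sequentially"
    if \<epsilon>_pos: "0 < \<epsilon>" for \<epsilon>
  proof -
    define A where "A n = {\<omega> \<in> space M. (\<epsilon> * real (n\<^sup>2))\<^sup>2 \<le> (S (n\<^sup>2) \<omega>)\<^sup>2}" for n
    have [measurable]: "A n \<in> sets M" for n unfolding A_def by measurable
    have "summable (\<lambda>n. C\<^sup>2 / \<epsilon>\<^sup>2 * inverse (real n ^ 2))"
      by (intro summable_mult inverse_power_summable) simp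
    then have "summable (\<lambda>n. measure M (A n))"
      by (rule summable_comparison_test'[where N = 1])
        (use mds_chebyshev_along_squares[OF \<epsilon>_pos] in \<open>simp add: A_def S_def\<close>)
    then have "AE \<omega> in M. eventually (\<lambda>n. \<omega> \<in> space M - A n) sequentially"
      by (intro borel_cantelli_AE1) (simp_all add: less_top[symmetric])
    then show ?thesis
    proof (rule AE_mp, intro AE_I2 impI)
      fix \<omega> assume "eventually (\<lambda>n. \<omega> \<in> space M - A n) sequentially"
      then show "eventually (\<lambda>n. \<bar>S (n\<^sup>2) \<omega> / real (n\<^sup>2)\<bar> \<le> \<epsilon>) sequentially"
      proof (rule eventually_mono)
        fix n assume "\<omega> \<in> space M - A n"
        then have "(S (n\<^sup>2) \<omega>)\<^sup>2 < (\<epsilon> * real (n\<^sup>2))\<^sup>2" by (auto simp: A_def)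
        then have "\<bar>S (n\<^sup>2) \<omega>\<bar> \<le> \<epsilon> * real (n\<^sup>2)"
          using \<epsilon>_pos by (metis abs_le_square_iff abs_of_nonneg less_imp_le of_nat_0_le_iff zero_le_mult_iff)
        then show "\<bar>S (n\<^sup>2) \<omega> / real (n\<^sup>2)\<bar> \<le> \<epsilon>"
          using \<epsilon>_pos by (cases "n = 0") (simp_all add: abs_div field_simps)
      qed
    qed
  qed
  then have "AE \<omega> in M. \<forall>m. eventually (\<lambda>n. \<bar>S (n\<^sup>2) \<omega> / real (n\<^sup>2)\<bar> \<le> inverse (real (Suc m))) sequentially"
    by (simp add: AE_all_countable)
  then show ?thesis
    unfolding S_def by eventually_elim (rule tendsto_zero_of_eventually_le_inverse_Suc, blast)
qed

theorem slln_bounded_mds: "AE \<omega> in M. (\<lambda>t. (\<Sum>s=1..t. d s \<omega>) / real t) \<longlonglongrightarrow> 0"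
proof -
  have "AE \<omega> in M. \<forall>n. \<bar>d n \<omega>\<bar> \<le> C"
    using d_bounded by (simp add: AE_all_countable)
  with mds_avg_along_squares show ?thesis
  proof eventually_elim
    case (elim \<omega>)
    show ?case
      by (rule tendsto_avg_of_tendsto_along_squares[where C = C]) (use elim in simp_all)
  qed
qed

end

context
  fixes eps :: "nat \<Rightarrow> 'a \<Rightarrow> real" and K \<sigma> :: real
  assumes eps_adapted: "\<And>n. eps n \<in> borel_measurable (G n)"
    and eps_bounded: "AE \<omega> in M. \<forall>n. \<bar>eps n \<omega>\<bar> \<le> K"
    and eps_mds: "\<And>n. AE \<omega> in M. real_cond_exp M (G n) (eps (Suc n)) \<omega> = 0"
    and eps_cond_var: "\<And>n. AE \<omega> in M. real_cond_exp M (G n) (\<lambda>\<omega>. (eps (Suc n) \<omega>)\<^sup>2) \<omega> = \<sigma>"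
begin

lemma slln_sq_minus_cond_var: "AE \<omega> in M. (\<lambda>t. (\<Sum>s=1..t. (eps s \<omega>)\<^sup>2 - \<sigma>) / real t) \<longlonglongrightarrow> 0"
proof (rule slln_bounded_mds[where C = "K\<^sup>2 + \<bar>\<sigma>\<bar>"])
  show "(\<lambda>\<omega>. (eps n \<omega>)\<^sup>2 - \<sigma>) \<in> borel_measurable (G n)" for n
    using eps_adapted[of n] by measurable
  show "AE \<omega> in M. \<bar>(eps n \<omega>)\<^sup>2 - \<sigma>\<bar> \<le> K\<^sup>2 + \<bar>\<sigma>\<bar>" for n
    using eps_bounded
  proof eventually_elim
    case (elim \<omega>)
    then have "(eps n \<omega>)\<^sup>2 \<le> K\<^sup>2" by (simp add: power2_le_if_abs_le)
    then show ?case
      using zero_le_power2[of "eps n \<omega>"] abs_ge_self[of \<sigma>] abs_ge_minus_self[of \<sigma>]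
      unfolding abs_le_iff by linarith
  qed
  show "AE \<omega> in M. real_cond_exp M (G n) (\<lambda>\<omega>. (eps (Suc n) \<omega>)\<^sup>2 - \<sigma>) \<omega> = 0" for n
  proof -
    interpret sigma_finite_subalgebra M "G n" by (rule sigma_finite_subalgebra_G)
    have [measurable]: "eps (Suc n) \<in> borel_measurable M"
      using measurable_G[OF eps_adapted] .
    have "integrable M (\<lambda>\<omega>. (eps (Suc n) \<omega>)\<^sup>2)"
    proof (rule integrable_const_bound[where B = "K\<^sup>2"])
      show "AE \<omega> in M. norm ((eps (Suc n) \<omega>)\<^sup>2) \<le> K\<^sup>2"
        using eps_bounded by eventually_elim (simp add: power2_le_if_abs_le)
    qed measurable
    then have "AE \<omega> in M. real_cond_exp M (G n) (\<lambda>\<omega>. (eps (Suc n) \<omega>)\<^sup>2 - \<sigma>) \<omega>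
        = real_cond_exp M (G n) (\<lambda>\<omega>. (eps (Suc n) \<omega>)\<^sup>2) \<omega> - real_cond_exp M (G n) (\<lambda>_. \<sigma>) \<omega>"
      by (intro real_cond_exp_diff) simp_all
    moreover have "AE \<omega> in M. real_cond_exp M (G n) (\<lambda>_. \<sigma>) \<omega> = \<sigma>"
      by (intro real_cond_exp_F_meas) simp_all
    ultimately show ?thesis
      using eps_cond_var[of n] by eventually_elim simp
  qed
qed

lemma slln_bounded_predictable_times_mds:
  assumes v_predictable: "\<And>n. v (Suc n) \<in> borel_measurable (G n)"
    and v_bounded: "\<And>n \<omega>. \<bar>v n \<omega>\<bar> \<le> B"
  shows "AE \<omega> in M. (\<lambda>t. (\<Sum>s=1..t. v s \<omega> * eps s \<omega>) / real t) \<longlonglongrightarrow> 0"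
proof (rule slln_bounded_mds[where C = "B * K"])
  show "(\<lambda>\<omega>. v n \<omega> * eps n \<omega>) \<in> borel_measurable (G n)" if "1 \<le> n" for n
    using that measurable_G_mono[OF v_predictable[of "n - 1"]] eps_adapted[of n] by simp
  show vK: "AE \<omega> in M. \<bar>v n \<omega> * eps n \<omega>\<bar> \<le> B * K" for n
    using eps_bounded
  proof eventually_elim
    case (elim \<omega>)
    have "0 \<le> B" using order_trans[OF abs_ge_zero v_bounded] .
    then show ?case unfolding abs_mult using elim by (intro mult_mono v_bounded) auto
  qed
  show "AE \<omega> in M. real_cond_exp M (G n) (\<lambda>\<omega>. v (Suc n) \<omega> * eps (Suc n) \<omega>) \<omega> = 0" for n
  proof -
    interpret sigma_finite_subalgebra M "G n" by (rule sigma_finite_subalgebra_G)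
    have [measurable]: "eps (Suc n) \<in> borel_measurable M" "v (Suc n) \<in> borel_measurable M"
      using measurable_G[OF eps_adapted] measurable_G[OF v_predictable] .
    have "integrable M (\<lambda>\<omega>. v (Suc n) \<omega> * eps (Suc n) \<omega>)"
    proof (rule integrable_const_bound[where B = "B * K"])
      show "AE \<omega> in M. norm (v (Suc n) \<omega> * eps (Suc n) \<omega>) \<le> B * K"
        using vK by simp
    qed measurable
    then have "AE \<omega> in M. real_cond_exp M (G n) (\<lambda>\<omega>. v (Suc n) \<omega> * eps (Suc n) \<omega>) \<omega>
        = v (Suc n) \<omega> * real_cond_exp M (G n) (eps (Suc n)) \<omega>"
      by (intro real_cond_exp_mult v_predictable) simp_all
    then show ?thesis
      using eps_mds[of n] by eventually_elim simp
  qed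
qed

lemma slln_predictable_times_mds:
  assumes w_predictable: "\<And>n. w (Suc n) \<in> borel_measurable (G n)"
    and w_bounded: "AE \<omega> in M. \<exists>B. \<forall>n\<ge>1. \<bar>w n \<omega>\<bar> \<le> B"
  shows "AE \<omega> in M. (\<lambda>t. (\<Sum>s=1..t. w s \<omega> * eps s \<omega>) / real t) \<longlonglongrightarrow> 0"
proof -
  \<comment> \<open>w is bounded only by a random constant, so the strong law is applied to its truncations.\<close>
  define clip where "clip N v = max (- real N) (min (real N) v)" for N :: nat and v :: real
  have "AE \<omega> in M. (\<lambda>t. (\<Sum>s=1..t. clip N (w s \<omega>) * eps s \<omega>) / real t) \<longlonglongrightarrow> 0" for N
    unfolding clip_def using w_predictable
    by (intro slln_bounded_predictable_times_mds[where B = "real N"]) auto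
  then have "AE \<omega> in M. \<forall>N. (\<lambda>t. (\<Sum>s=1..t. clip N (w s \<omega>) * eps s \<omega>) / real t) \<longlonglongrightarrow> 0"
    by (simp add: AE_all_countable)
  with w_bounded show ?thesis
  proof eventually_elim
    case (elim \<omega>)
    then obtain B where B: "\<And>n. 1 \<le> n \<Longrightarrow> \<bar>w n \<omega>\<bar> \<le> B" by blast
    obtain N :: nat where "B \<le> real N" using real_arch_simple by blast
    then have "clip N (w s \<omega>) = w s \<omega>" if "1 \<le> s" for s
      using B[OF that] by (auto simp: clip_def abs_le_iff)
    then have "(\<Sum>s=1..t. clip N (w s \<omega>) * eps s \<omega>) = (\<Sum>s=1..t. w s \<omega> * eps s \<omega>)" for t
      by (intro sum.cong) simp_all
    then show ?case using elim(2)[rule_format, of N] by simp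
  qed
qed

lemma liminf_avg_sq_innovations:
  assumes w_predictable: "\<And>n. w (Suc n) \<in> borel_measurable (G n)"
    and w_bounded: "AE \<omega> in M. \<exists>B. \<forall>n\<ge>1. \<bar>w n \<omega>\<bar> \<le> B"
  shows "AE \<omega> in M. ereal \<sigma> \<le> Liminf sequentially (\<lambda>t. ereal (1 / real t * (\<Sum>s=1..t. (eps s \<omega> + w s \<omega>)\<^sup>2)))"
  using slln_sq_minus_cond_var slln_predictable_times_mds[OF assms]
  by eventually_elim (rule liminf_avg_sq_ge)

end

end

section \<open>The stochastic setting\<close>

lemma abs_sums_le:
  fixes c u h :: "nat \<Rightarrow> real"
  assumes "(\<lambda>j. c j * u j) sums v" and "\<And>j. \<bar>c j\<bar> \<le> h j" and "summable h" and "\<And>j. \<bar>u j\<bar> \<le> K"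
  shows "\<bar>v\<bar> \<le> K * suminf h"
proof -
  have "\<bar>c j\<bar> * \<bar>u j\<bar> \<le> h j * K" for j
    using assms(2,4)[of j] by (intro mult_mono) (auto intro: order_trans[OF abs_ge_zero])
  then have "\<bar>c j * u j\<bar> \<le> K * h j" for j
    by (simp add: abs_mult mult.commute)
  then have "\<bar>suminf (\<lambda>j. c j * u j)\<bar> \<le> suminf (\<lambda>j. K * h j)"
    using norm_suminf_le[of "\<lambda>j. c j * u j"] summable_mult[OF assms(3)] by simp
  then show ?thesis
    using sums_unique[OF assms(1)] suminf_mult[OF assms(3)] by simp
qed

lemma bounded_inverse_of_Liminf_gt:
  fixes f :: "nat \<Rightarrow> real"
  assumes pos: "0 < c" and lim: "ereal c < Liminf sequentially (\<lambda>t. ereal (f t))" and nonneg: "\<And>t. 0 \<le> f t"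
  shows "\<exists>b. \<forall>t. inverse (f t) \<le> b"
proof -
  obtain T where T: "\<And>t. T \<le> t \<Longrightarrow> c < f t"
    using less_LiminfD[OF lim] by (auto simp: eventually_sequentially)
  have inv_c: "0 < inverse c" using pos by simp
  have sum_nonneg': "0 \<le> (\<Sum>s<T. inverse (f s))"
    using nonneg by (simp add: sum_nonneg)
  have "inverse (f t) \<le> inverse c + (\<Sum>s<T. inverse (f s))" for t
  proof (cases "T \<le> t")
    case True
    then have "inverse (f t) \<le> inverse c"
      using T pos by (intro le_imp_inverse_le) (auto intro: less_imp_le)
    then show ?thesis using sum_nonneg' by linarith
  next
    case False
    then have "inverse (f t) \<le> (\<Sum>s<T. inverse (f s))"
      using nonneg by (intro member_le_sum) auto
    then show ?thesis using inv_c by linarith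
  qed
  then show ?thesis by blast
qed

text \<open>Measurable majorants are formed as suprema in \<open>ereal\<close>: the real supremum of a family is
  meaningful only where the family is bounded, which will hold merely almost surely.\<close>

lemma le_real_of_ereal_SUP:
  fixes f :: "nat \<Rightarrow> real"
  assumes "\<And>t. 0 \<le> f t" and "\<And>t. f t \<le> b"
  shows "f t \<le> real_of_ereal (SUP t. ereal (f t))" and "real_of_ereal (SUP t. ereal (f t)) \<le> b"
proof -
  have upper: "ereal (f t) \<le> (SUP t. ereal (f t))" for t by (rule SUP_upper) simp
  have least: "(SUP t. ereal (f t)) \<le> ereal b" by (rule SUP_least) (simp add: assms(2))
  obtain x where x: "(SUP t. ereal (f t)) = ereal x"
    using upper[of 0] least assms(1)[of 0] by (cases "SUP t. ereal (f t)") auto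
  show "f t \<le> real_of_ereal (SUP t. ereal (f t))" using upper[of t] x by simp
  show "real_of_ereal (SUP t. ereal (f t)) \<le> b" using least x by simp
qed

locale stable_recursion = prob_space M for M :: "'a measure" +
  fixes y eps :: "int \<Rightarrow> 'a \<Rightarrow> real" and kappa :: "nat \<Rightarrow> real" and sigma_e K \<beta> :: real
    and kstar :: "'a \<Rightarrow> nat" and Kstar :: "'a \<Rightarrow> real"
  assumes y_meas: "\<And>t. y t \<in> borel_measurable M"
    and D1: "measure M {\<omega> \<in> space M. (y 1 \<omega>)\<^sup>2 > 0} = 1"
    and kappa0: "kappa 0 = 1"
    and kappa_abs: "summable (\<lambda>s. \<bar>kappa s\<bar>)"
    and y_MA: "AE \<omega> in M. \<forall>t. (\<lambda>s. kappa s * eps (t - int s) \<omega>) sums y t \<omega>"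
    and eps_adapted: "\<And>t. eps t \<in> borel_measurable (nat_filt M y t)"
    and eps_mds: "\<And>t. AE \<omega> in M. real_cond_exp M (nat_filt M y (t - 1)) (eps t) \<omega> = 0"
    and D3: "\<And>t. AE \<omega> in M. real_cond_exp M (nat_filt M y (t - 1)) (\<lambda>\<omega>. (eps t \<omega>)\<^sup>2) \<omega> = sigma_e\<^sup>2"
    and D4: "AE \<omega> in M. \<forall>t. \<bar>eps t \<omega>\<bar> \<le> K"
    and beta: "0 \<le> \<beta>" "\<beta> \<le> 1"
    and theta_bdd: "AE \<omega> in M. 0 < Kstar \<omega> \<and> Kstar \<omega> < 1 \<and>
                      (\<forall>t\<ge>1. \<bar>alg_theta \<beta> (\<lambda>s. y (int s) \<omega>) (t + kstar \<omega>)\<bar> \<le> Kstar \<omega>)"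
begin

abbreviation F :: "int \<Rightarrow> 'a measure" where
  "F \<equiv> nat_filt M y"

abbreviation ypath :: "'a \<Rightarrow> nat \<Rightarrow> real" where
  "ypath \<omega> \<equiv> \<lambda>s. y (int s) \<omega>"

sublocale filtered_prob_space M "\<lambda>n. F (int n)"
  by unfold_locales (simp_all add: subalgebra_nat_filt[OF y_meas] subalgebra_nat_filt_mono)

definition kappa_e :: "nat \<Rightarrow> nat \<Rightarrow> 'a \<Rightarrow> real" where
  "kappa_e t j \<omega> = coeff_x 1 kappa (alg_theta \<beta> (ypath \<omega>)) (t - 1) j"

definition kappa_x :: "nat \<Rightarrow> nat \<Rightarrow> 'a \<Rightarrow> real" where
  "kappa_x t j \<omega> = coeff_x \<beta> kappa (alg_theta \<beta> (ypath \<omega>)) (t - 1) j"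

definition kappa_phi :: "nat \<Rightarrow> nat \<Rightarrow> 'a \<Rightarrow> real" where
  "kappa_phi t j \<omega> = coeff_phi \<beta> kappa (alg_theta \<beta> (ypath \<omega>)) (t - 1) j"

definition kappa_z :: "nat \<Rightarrow> nat \<Rightarrow> 'a \<Rightarrow> real" where
  "kappa_z t j \<omega> = coeff_z \<beta> kappa (alg_theta \<beta> (ypath \<omega>)) (t - 1) j"

lemma y_measurable_F: "s \<le> n \<Longrightarrow> (\<lambda>\<omega>. ypath \<omega> s) \<in> borel_measurable (F (int n))"
  by (rule measurable_nat_filt) simp

lemma alg_measurable_F:
  "(\<lambda>\<omega>. alg_theta \<beta> (ypath \<omega>) (Suc n)) \<in> borel_measurable (F (int (Suc n)))"
  "(\<lambda>\<omega>. alg_phi \<beta> (ypath \<omega>) (Suc n)) \<in> borel_measurable (F (int (Suc n)))"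
  by (rule alg_accessors_measurable, rule y_measurable_F, assumption)+

lemma theta_measurable: "(\<lambda>\<omega>. alg_theta \<beta> (ypath \<omega>) t) \<in> borel_measurable (F (int t))"
proof (cases t)
  case (Suc n)
  then show ?thesis using alg_measurable_F(1) by simp
qed (simp add: alg_initial)

lemma phi_measurable: "(\<lambda>\<omega>. alg_phi \<beta> (ypath \<omega>) t) \<in> borel_measurable M"
proof -
  have "(\<lambda>\<omega>. alg_phi \<beta> (ypath \<omega>) (Suc (t - 1))) \<in> borel_measurable M"
    by (rule measurable_G[OF alg_measurable_F(2)])
  then show ?thesis by (simp add: alg_phi_def)
qed

lemma kappa_coeffs_measurable:
  assumes "1 \<le> t"
  shows "kappa_e t j \<in> borel_measurable (F (int t - 1))" "kappa_x t j \<in> borel_measurable (F (int t - 1))"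
    "kappa_phi t j \<in> borel_measurable (F (int t - 1))" "kappa_z t j \<in> borel_measurable (F (int t - 1))"
proof -
  have theta: "(\<lambda>\<omega>. alg_theta \<beta> (ypath \<omega>) s) \<in> borel_measurable (F (int (t - 1)))" if "s \<le> t - 1" for s
    using measurable_G_mono[OF theta_measurable that] .
  have "F (int t - 1) = F (int (t - 1))" using assms by (simp add: of_nat_diff)
  then show "kappa_e t j \<in> borel_measurable (F (int t - 1))" "kappa_x t j \<in> borel_measurable (F (int t - 1))"
    "kappa_phi t j \<in> borel_measurable (F (int t - 1))" "kappa_z t j \<in> borel_measurable (F (int t - 1))"
    unfolding kappa_e_def kappa_x_def kappa_phi_def kappa_z_def
    using coeffs_measurable[OF theta] by simp_all
qed

lemma ma_representation:
  "AE \<omega> in M. \<forall>t\<ge>1.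
     (\<lambda>j. kappa_e t j \<omega> * eps (int t - int j) \<omega>) sums alg_e \<beta> (ypath \<omega>) t \<and>
     (\<lambda>j. kappa_phi t j \<omega> * eps (int t - int j) \<omega>) sums alg_phi \<beta> (ypath \<omega>) t \<and>
     (\<lambda>j. kappa_x t j \<omega> * eps (int t - int j) \<omega>) sums alg_x \<beta> (ypath \<omega>) t \<and>
     (\<lambda>j. kappa_z t j \<omega> * eps (int t - int j) \<omega>) sums alg_z \<beta> (ypath \<omega>) t"
  using y_MA
proof eventually_elim
  case (elim \<omega>)
  have ma: "(\<lambda>s. kappa s * eps (int t - int s) \<omega>) sums ypath \<omega> t" for t
    using elim by blast
  show ?case
  proof (intro allI impI)
    fix t :: nat assume "1 \<le> t"
    then obtain n where "t = Suc n" by (cases t) auto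
    then show "(\<lambda>j. kappa_e t j \<omega> * eps (int t - int j) \<omega>) sums alg_e \<beta> (ypath \<omega>) t \<and>
     (\<lambda>j. kappa_phi t j \<omega> * eps (int t - int j) \<omega>) sums alg_phi \<beta> (ypath \<omega>) t \<and>
     (\<lambda>j. kappa_x t j \<omega> * eps (int t - int j) \<omega>) sums alg_x \<beta> (ypath \<omega>) t \<and>
     (\<lambda>j. kappa_z t j \<omega> * eps (int t - int j) \<omega>) sums alg_z \<beta> (ypath \<omega>) t"
      unfolding kappa_e_def kappa_x_def kappa_phi_def kappa_z_def
      using alg_ma_representation[OF ma] by simp
  qed
qed

lemma kappa_coeffs_measurable_M:
  "kappa_e t j \<in> borel_measurable M" "kappa_x t j \<in> borel_measurable M"
  "kappa_phi t j \<in> borel_measurable M" "kappa_z t j \<in> borel_measurable M"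
  unfolding kappa_e_def kappa_x_def kappa_phi_def kappa_z_def
  using coeffs_measurable[OF measurable_G[OF theta_measurable]] by simp_all

lemma kappa_coeffs_majorant:
  "\<exists>kt :: nat \<Rightarrow> 'a \<Rightarrow> real. (\<forall>j. kt j \<in> borel_measurable M) \<and>
     (AE \<omega> in M. (\<forall>t\<ge>1. \<forall>j. max (max \<bar>kappa_e t j \<omega>\<bar> \<bar>kappa_phi t j \<omega>\<bar>)
                               (max \<bar>kappa_x t j \<omega>\<bar> \<bar>kappa_z t j \<omega>\<bar>) \<le> kt j \<omega>)
               \<and> summable (\<lambda>j. kt j \<omega>))"
proof (intro exI conjI allI)
  define mx where "mx t j \<omega> = max (max \<bar>kappa_e t j \<omega>\<bar> \<bar>kappa_phi t j \<omega>\<bar>) (max \<bar>kappa_x t j \<omega>\<bar> \<bar>kappa_z t j \<omega>\<bar>)"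
    for t j \<omega>
  define kt where "kt j \<omega> = real_of_ereal (SUP t. ereal (mx t j \<omega>))" for j \<omega>
  show "kt j \<in> borel_measurable M" for j
    unfolding kt_def mx_def using kappa_coeffs_measurable_M by measurable
  have mx_nonneg: "0 \<le> mx t j \<omega>" for t j \<omega>
    by (simp add: mx_def)
  show "AE \<omega> in M. (\<forall>t\<ge>1. \<forall>j. mx t j \<omega> \<le> kt j \<omega>) \<and> summable (\<lambda>j. kt j \<omega>)"
    using theta_bdd
  proof eventually_elim
    case (elim \<omega>)
    have "\<bar>\<beta>\<bar> \<le> 1" using beta by simp
    then obtain H where H: "summable H"
      "\<And>n j. \<bar>coeff_x 1 kappa (alg_theta \<beta> (ypath \<omega>)) n j\<bar> \<le> H j"
      "\<And>n j. \<bar>coeff_x \<beta> kappa (alg_theta \<beta> (ypath \<omega>)) n j\<bar> \<le> H j"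
      "\<And>n j. \<bar>coeff_phi \<beta> kappa (alg_theta \<beta> (ypath \<omega>)) n j\<bar> \<le> H j"
      "\<And>n j. \<bar>coeff_z \<beta> kappa (alg_theta \<beta> (ypath \<omega>)) n j\<bar> \<le> H j"
      using coeffs_summable_majorant[where r = "Kstar \<omega>" and th = "alg_theta \<beta> (ypath \<omega>)" and m = "kstar \<omega>"]
        elim kappa_abs by blast
    have mx_le: "mx t j \<omega> \<le> H j" for t j
      unfolding mx_def kappa_e_def kappa_x_def kappa_phi_def kappa_z_def using H by simp
    have kt_bounds: "mx t j \<omega> \<le> kt j \<omega>" "kt j \<omega> \<le> H j" for t j
      unfolding kt_def using le_real_of_ereal_SUP[of "\<lambda>t. mx t j \<omega>" "H j", OF mx_nonneg mx_le] by simp_all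
    have "summable (\<lambda>j. kt j \<omega>)"
    proof (rule summable_comparison_test'[OF H(1)])
      show "norm (kt j \<omega>) \<le> H j" for j
        using kt_bounds(1)[of 0 j] kt_bounds(2)[of j] mx_nonneg[of 0 j \<omega>] by simp
    qed
    then show ?case using kt_bounds by blast
  qed
qed

lemma ma_coefficients:
  "\<exists>ke kphi kx kz :: nat \<Rightarrow> nat \<Rightarrow> 'a \<Rightarrow> real.
     (\<forall>t\<ge>1. \<forall>j. ke t j \<in> borel_measurable (F (int t - 1)) \<and> kphi t j \<in> borel_measurable (F (int t - 1)) \<and>
                 kx t j \<in> borel_measurable (F (int t - 1)) \<and> kz t j \<in> borel_measurable (F (int t - 1)))
   \<and> (AE \<omega> in M. \<forall>t\<ge>1.
         (\<lambda>j. ke t j \<omega> * eps (int t - int j) \<omega>) sums alg_e \<beta> (ypath \<omega>) t \<and>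
         (\<lambda>j. kphi t j \<omega> * eps (int t - int j) \<omega>) sums alg_phi \<beta> (ypath \<omega>) t \<and>
         (\<lambda>j. kx t j \<omega> * eps (int t - int j) \<omega>) sums alg_x \<beta> (ypath \<omega>) t \<and>
         (\<lambda>j. kz t j \<omega> * eps (int t - int j) \<omega>) sums alg_z \<beta> (ypath \<omega>) t)
   \<and> (\<exists>kt :: nat \<Rightarrow> 'a \<Rightarrow> real. (\<forall>j. kt j \<in> borel_measurable M) \<and>
        (AE \<omega> in M. (\<forall>t\<ge>1. \<forall>j. max (max \<bar>ke t j \<omega>\<bar> \<bar>kphi t j \<omega>\<bar>) (max \<bar>kx t j \<omega>\<bar> \<bar>kz t j \<omega>\<bar>) \<le> kt j \<omega>)
                   \<and> summable (\<lambda>j. kt j \<omega>)))"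
proof (rule exI[of _ kappa_e], rule exI[of _ kappa_phi], rule exI[of _ kappa_x], rule exI[of _ kappa_z],
    intro conjI)
  show "\<forall>t\<ge>1. \<forall>j. kappa_e t j \<in> borel_measurable (F (int t - 1)) \<and> kappa_phi t j \<in> borel_measurable (F (int t - 1)) \<and>
                 kappa_x t j \<in> borel_measurable (F (int t - 1)) \<and> kappa_z t j \<in> borel_measurable (F (int t - 1))"
    using kappa_coeffs_measurable by simp
qed (rule ma_representation kappa_coeffs_majorant)+

lemma processes_bounded:
  "AE \<omega> in M. \<exists>B. \<forall>t\<ge>1. \<bar>alg_e \<beta> (ypath \<omega>) t\<bar> \<le> B \<and> \<bar>alg_phi \<beta> (ypath \<omega>) t\<bar> \<le> B \<and>
                        \<bar>alg_x \<beta> (ypath \<omega>) t\<bar> \<le> B \<and> \<bar>alg_z \<beta> (ypath \<omega>) t\<bar> \<le> B"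
proof -
  obtain kt where kt: "AE \<omega> in M. (\<forall>t\<ge>1. \<forall>j. max (max \<bar>kappa_e t j \<omega>\<bar> \<bar>kappa_phi t j \<omega>\<bar>)
                               (max \<bar>kappa_x t j \<omega>\<bar> \<bar>kappa_z t j \<omega>\<bar>) \<le> kt j \<omega>)
               \<and> summable (\<lambda>j. kt j \<omega>)"
    using kappa_coeffs_majorant by blast
  show ?thesis
    using ma_representation kt D4
  proof eventually_elim
    case (elim \<omega>)
    have eps_le: "\<bar>eps (int t - int j) \<omega>\<bar> \<le> K" for t j using elim(3) by blast
    have "summable (\<lambda>j. kt j \<omega>)" using elim(2) by blast
    note bound = abs_sums_le[OF _ _ this eps_le]
    show ?case
      by (intro exI[of _ "K * (\<Sum>j. kt j \<omega>)"] allI impI conjI bound)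
        (use elim in \<open>fastforce+\<close>)
  qed
qed

lemma eps_measurable [measurable]: "eps t \<in> borel_measurable M"
  using measurable_from_subalg[OF subalgebra_nat_filt[OF y_meas] eps_adapted] .

lemma eps_sq_integrable: "integrable M (\<lambda>\<omega>. (eps t \<omega>)\<^sup>2)"
proof (rule integrable_const_bound[where B = "K\<^sup>2"])
  show "AE \<omega> in M. norm ((eps t \<omega>)\<^sup>2) \<le> K\<^sup>2"
    using D4 by eventually_elim (simp add: power2_le_if_abs_le)
qed measurable

lemma integral_eps_sq: "(\<integral>\<omega>. (eps t \<omega>)\<^sup>2 \<partial>M) = sigma_e\<^sup>2"
proof -
  interpret sigma_finite_subalgebra M "F (t - 1)"
    by (rule sigma_finite_subalgebra_if_subalgebra[OF subalgebra_nat_filt[OF y_meas]])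
  have "(\<integral>\<omega>. (eps t \<omega>)\<^sup>2 \<partial>M) = (\<integral>\<omega>. real_cond_exp M (F (t - 1)) (\<lambda>\<omega>. (eps t \<omega>)\<^sup>2) \<omega> \<partial>M)"
    by (rule real_cond_exp_int(2)[OF eps_sq_integrable, symmetric])
  also have "\<dots> = (\<integral>\<omega>. sigma_e\<^sup>2 \<partial>M)"
    using D3[of t] by (intro integral_cong_AE) auto
  finally show ?thesis by (simp add: prob_space)
qed

lemma sigma_e_sq_pos: "0 < sigma_e\<^sup>2"
proof (rule ccontr)
  assume "\<not> 0 < sigma_e\<^sup>2"
  then have "(\<integral>\<omega>. (eps t \<omega>)\<^sup>2 \<partial>M) = 0" for t
    using integral_eps_sq by simp
  then have "AE \<omega> in M. (eps t \<omega>)\<^sup>2 = 0" for t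
    using integral_nonneg_eq_0_iff_AE[OF eps_sq_integrable] by simp
  then have "AE \<omega> in M. \<forall>t. eps t \<omega> = 0"
    by (simp add: AE_all_countable)
  then have "AE \<omega> in M. \<not> 0 < (y 1 \<omega>)\<^sup>2"
    using y_MA
  proof eventually_elim
    case (elim \<omega>)
    then have "(\<lambda>s. kappa s * eps (1 - int s) \<omega>) sums 0" and "(\<lambda>s. kappa s * eps (1 - int s) \<omega>) sums y 1 \<omega>"
      by simp_all
    then show ?case using sums_unique2 by fastforce
  qed
  then have "measure M {\<omega> \<in> space M. 0 < (y 1 \<omega>)\<^sup>2} = 0"
    by (rule prob_eq_0_AE)
  then show False using D1 by simp
qed

definition phi_forecast :: "nat \<Rightarrow> 'a \<Rightarrow> real" where
  "phi_forecast t \<omega> = (\<Sum>j. kappa_phi t (Suc j) \<omega> * eps (int t - int (Suc j)) \<omega>)"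

lemma phi_forecast_predictable: "phi_forecast (Suc n) \<in> borel_measurable (F (int n))"
proof -
  have [measurable]: "kappa_phi (Suc n) j \<in> borel_measurable (F (int n))" for j
    using kappa_coeffs_measurable(3)[of "Suc n" j] by simp
  have [measurable]: "eps (int (Suc n) - int (Suc j)) \<in> borel_measurable (F (int n))" for j
    using measurable_from_subalg[OF subalgebra_nat_filt_mono eps_adapted] by simp
  show ?thesis unfolding phi_forecast_def by measurable
qed

lemma phi_eq_innovation_plus_forecast:
  "AE \<omega> in M. \<forall>t\<ge>1. alg_phi \<beta> (ypath \<omega>) t = eps (int t) \<omega> + phi_forecast t \<omega>"
  using ma_representation
proof eventually_elim
  case (elim \<omega>)
  show ?case
  proof (intro allI impI)
    fix t :: nat assume "1 \<le> t"
    define f where "f j = kappa_phi t j \<omega> * eps (int t - int j) \<omega>" for j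
    have "f sums alg_phi \<beta> (ypath \<omega>) t" using elim \<open>1 \<le> t\<close> unfolding f_def by blast
    then have "(\<lambda>j. f (Suc j)) sums (alg_phi \<beta> (ypath \<omega>) t - f 0)"
      by (simp add: sums_Suc_iff)
    moreover have "f 0 = eps (int t) \<omega>"
      by (simp add: f_def kappa_phi_def coeff_phi_0 kappa0)
    ultimately show "alg_phi \<beta> (ypath \<omega>) t = eps (int t) \<omega> + phi_forecast t \<omega>"
      unfolding phi_forecast_def f_def by (simp add: sums_iff)
  qed
qed

lemma phi_forecast_bounded: "AE \<omega> in M. \<exists>B. \<forall>n\<ge>1. \<bar>phi_forecast n \<omega>\<bar> \<le> B"
  using processes_bounded phi_eq_innovation_plus_forecast D4
proof eventually_elim
  case (elim \<omega>)
  then obtain B where B: "\<And>t. 1 \<le> t \<Longrightarrow> \<bar>alg_phi \<beta> (ypath \<omega>) t\<bar> \<le> B" by blast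
  have "\<bar>phi_forecast n \<omega>\<bar> \<le> B + K" if "1 \<le> n" for n
  proof -
    have eq: "phi_forecast n \<omega> = alg_phi \<beta> (ypath \<omega>) n - eps (int n) \<omega>"
      using elim(2) that by simp
    have "\<bar>eps (int n) \<omega>\<bar> \<le> K" using elim(3) by blast
    then show ?thesis
      unfolding eq using B[OF that] abs_triangle_ineq4[of "alg_phi \<beta> (ypath \<omega>) n" "eps (int n) \<omega>"]
      by linarith
  qed
  then show ?case by blast
qed

lemma liminf_avg_phi_sq:
  "AE \<omega> in M. ereal (sigma_e\<^sup>2)
     \<le> Liminf sequentially (\<lambda>t. ereal (1 / real t * (\<Sum>s=1..t. (alg_phi \<beta> (ypath \<omega>) s)\<^sup>2)))"
proof -
  have "AE \<omega> in M. ereal (sigma_e\<^sup>2)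
     \<le> Liminf sequentially (\<lambda>t. ereal (1 / real t * (\<Sum>s=1..t. (eps (int s) \<omega> + phi_forecast s \<omega>)\<^sup>2)))"
  proof (rule liminf_avg_sq_innovations[where K = K])
    show "(\<lambda>\<omega>. eps (int n) \<omega>) \<in> borel_measurable (F (int n))" for n
      using eps_adapted by simp
    show "AE \<omega> in M. \<forall>n. \<bar>eps (int n) \<omega>\<bar> \<le> K"
      using D4 by eventually_elim simp
    show "AE \<omega> in M. real_cond_exp M (F (int n)) (\<lambda>\<omega>. eps (int (Suc n)) \<omega>) \<omega> = 0" for n
      using eps_mds[of "int (Suc n)"] by simp
    show "AE \<omega> in M. real_cond_exp M (F (int n)) (\<lambda>\<omega>. (eps (int (Suc n)) \<omega>)\<^sup>2) \<omega> = sigma_e\<^sup>2" for n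
      using D3[of "int (Suc n)"] by simp
    show "phi_forecast (Suc n) \<in> borel_measurable (F (int n))" for n
      by (rule phi_forecast_predictable)
  qed (rule phi_forecast_bounded)
  then show ?thesis
    using phi_eq_innovation_plus_forecast
  proof eventually_elim
    case (elim \<omega>)
    have "(\<Sum>s=1..t. (alg_phi \<beta> (ypath \<omega>) s)\<^sup>2) = (\<Sum>s=1..t. (eps (int s) \<omega> + phi_forecast s \<omega>)\<^sup>2)" for t
      using elim(2) by (intro sum.cong) simp_all
    then show ?case using elim(1) by simp
  qed
qed

lemma inverse_avg_phi_sq_bounded:
  "\<exists>KK :: 'a \<Rightarrow> real. KK \<in> borel_measurable M \<and>
     (AE \<omega> in M. \<forall>t\<ge>1. inverse (1 / real t * (\<Sum>s=1..t. (alg_phi \<beta> (ypath \<omega>) s)\<^sup>2)) \<le> KK \<omega>)"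
proof (intro exI conjI)
  define avg where "avg t \<omega> = 1 / real t * (\<Sum>s=1..t. (alg_phi \<beta> (ypath \<omega>) s)\<^sup>2)" for t \<omega>
  have avg_nonneg: "0 \<le> avg t \<omega>" for t \<omega>
    by (simp add: avg_def sum_nonneg)
  define KK where "KK \<omega> = real_of_ereal (SUP t. ereal (inverse (avg t \<omega>)))" for \<omega>
  show "KK \<in> borel_measurable M"
    unfolding KK_def avg_def using phi_measurable by measurable
  show "AE \<omega> in M. \<forall>t\<ge>1. inverse (avg t \<omega>) \<le> KK \<omega>"
    using liminf_avg_phi_sq
  proof eventually_elim
    case (elim \<omega>)
    have "ereal (sigma_e\<^sup>2 / 2) < ereal (sigma_e\<^sup>2)"
      using sigma_e_sq_pos by simp
    also have "\<dots> \<le> Liminf sequentially (\<lambda>t. ereal (avg t \<omega>))"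
      using elim unfolding avg_def .
    finally have "ereal (sigma_e\<^sup>2 / 2) < Liminf sequentially (\<lambda>t. ereal (avg t \<omega>))" .
    then obtain b where b: "\<And>t. inverse (avg t \<omega>) \<le> b"
      using bounded_inverse_of_Liminf_gt[of "sigma_e\<^sup>2 / 2"] sigma_e_sq_pos avg_nonneg by fastforce
    have "0 \<le> inverse (avg t \<omega>)" for t
      using avg_nonneg by simp
    then show ?case
      unfolding KK_def using le_real_of_ereal_SUP(1)[of "\<lambda>t. inverse (avg t \<omega>)" b, OF _ b] by blast
  qed
qed

lemma inverse_Pbar_bounded: "AE \<omega> in M. \<exists>B. \<forall>t\<ge>2. inverse (alg_Pbar \<beta> (ypath \<omega>) t) \<le> B"
proof -
  obtain KK where KK: "AE \<omega> in M. \<forall>t\<ge>1. inverse (1 / real t * (\<Sum>s=1..t. (alg_phi \<beta> (ypath \<omega>) s)\<^sup>2)) \<le> KK \<omega>"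
    using inverse_avg_phi_sq_bounded by blast
  show ?thesis
    using KK
  proof eventually_elim
    case (elim \<omega>)
    have "inverse (alg_Pbar \<beta> (ypath \<omega>) t) \<le> 2 * KK \<omega>" if "2 \<le> t" for t
    proof -
      obtain m where m: "t = Suc m" "1 \<le> m" using \<open>2 \<le> t\<close> by (cases t) auto
      define A where "A = 1 / real m * (\<Sum>s=1..m. (alg_phi \<beta> (ypath \<omega>) s)\<^sup>2)"
      have "alg_Pbar \<beta> (ypath \<omega>) t = real m / real (Suc m) * A"
        using m by (simp add: alg_Pbar_def A_def atLeastLessThanSuc_atLeastAtMost)
      then have "inverse (alg_Pbar \<beta> (ypath \<omega>) t) = real (Suc m) / real m * inverse A"
        by (simp only: inverse_mult_distrib inverse_divide)
      also have "\<dots> \<le> 2 * KK \<omega>"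
        using m elim[rule_format, of m] by (intro mult_mono) (auto simp: A_def field_simps sum_nonneg)
      finally show ?thesis .
    qed
    then show ?case by blast
  qed
qed

lemma theta_increment_tendsto_0:
  "AE \<omega> in M. (\<lambda>t. alg_theta \<beta> (ypath \<omega>) (Suc t) - alg_theta \<beta> (ypath \<omega>) t) \<longlonglongrightarrow> 0"
proof -
  obtain KK where KK: "AE \<omega> in M. \<forall>t\<ge>1. inverse (1 / real t * (\<Sum>s=1..t. (alg_phi \<beta> (ypath \<omega>) s)\<^sup>2)) \<le> KK \<omega>"
    using inverse_avg_phi_sq_bounded by blast
  show ?thesis
    using processes_bounded KK
  proof eventually_elim
    case (elim \<omega>)
    obtain B where B: "\<And>t. 1 \<le> t \<Longrightarrow> \<bar>alg_e \<beta> (ypath \<omega>) t\<bar> \<le> B \<and> \<bar>alg_phi \<beta> (ypath \<omega>) t\<bar> \<le> B"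
      using elim(1) by blast
    have increment_le: "\<bar>alg_theta \<beta> (ypath \<omega>) (Suc t) - alg_theta \<beta> (ypath \<omega>) t\<bar> \<le> B * B * KK \<omega> / real t"
      if "1 \<le> t" for t
    proof -
      define A where "A = 1 / real t * (\<Sum>s=1..t. (alg_phi \<beta> (ypath \<omega>) s)\<^sup>2)"
      have "alg_theta \<beta> (ypath \<omega>) (Suc t) - alg_theta \<beta> (ypath \<omega>) t
          = alg_phi \<beta> (ypath \<omega>) t * alg_e \<beta> (ypath \<omega>) (Suc t) * inverse A / real t"
        using alg_theta_increment[OF that] that by (simp add: A_def divide_inverse inverse_mult_distrib mult_ac)
      moreover have "\<bar>alg_phi \<beta> (ypath \<omega>) t * alg_e \<beta> (ypath \<omega>) (Suc t)\<bar> \<le> B * B"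
        using B[OF that] B[of "Suc t"] unfolding abs_mult by (intro mult_mono) auto
      moreover have "0 \<le> inverse A" "inverse A \<le> KK \<omega>"
        using elim(2) that by (simp_all add: A_def sum_nonneg)
      ultimately show ?thesis
        by (simp add: abs_mult divide_right_mono mult_mono)
    qed
    show ?case
      by (rule Lim_null_comparison[OF eventually_sequentiallyI lim_const_over_n])
        (use increment_le in simp)
  qed
qed

end

theorem proposition4p7:
  fixes M :: "'a measure"
    and y eps :: "int \<Rightarrow> 'a \<Rightarrow> real"
    and kappa :: "nat \<Rightarrow> real"
    and sigma_e K \<beta> :: real
    and kstar :: "'a \<Rightarrow> nat"
    and Kstar :: "'a \<Rightarrow> real"
  defines "F \<equiv> nat_filt M y"
    and "theta \<equiv> (\<lambda>t \<omega>. alg_theta \<beta> (\<lambda>s. y (int s) \<omega>) t)"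
    and "Pbar \<equiv> (\<lambda>t \<omega>. alg_Pbar \<beta> (\<lambda>s. y (int s) \<omega>) t)"
    and "e \<equiv> (\<lambda>t \<omega>. alg_e \<beta> (\<lambda>s. y (int s) \<omega>) t)"
    and "x \<equiv> (\<lambda>t \<omega>. alg_x \<beta> (\<lambda>s. y (int s) \<omega>) t)"
    and "phi \<equiv> (\<lambda>t \<omega>. alg_phi \<beta> (\<lambda>s. y (int s) \<omega>) t)"
    and "z \<equiv> (\<lambda>t \<omega>. alg_z \<beta> (\<lambda>s. y (int s) \<omega>) t)"
  assumes M: "prob_space M"
    \<comment> \<open>real, mean-zero, covariance-stationary\<close>
    and y_meas: "\<And>t. y t \<in> borel_measurable M"
    and y_sq_int: "\<And>t. integrable M (\<lambda>\<omega>. (y t \<omega>)\<^sup>2)"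
    and y_mean: "\<And>t. (\<integral>\<omega>. y t \<omega> \<partial>M) = 0"
    and y_cov: "\<And>t h. (\<integral>\<omega>. y (t + h) \<omega> * y t \<omega> \<partial>M) = (\<integral>\<omega>. y h \<omega> * y 0 \<omega> \<partial>M)"
    \<comment> \<open>(D1)\<close>
    and D1: "measure M {\<omega> \<in> space M. (y 1 \<omega>)\<^sup>2 > 0} = 1"
    \<comment> \<open>(D2)\<close>
    and kappa0: "kappa 0 = 1"
    and kappa_abs: "summable (\<lambda>s. \<bar>kappa s\<bar>)"
    and kappa_nz: "\<And>w::complex. norm w \<le> 1 \<Longrightarrow> (\<Sum>s. complex_of_real (kappa s) * w ^ s) \<noteq> 0"
    and y_MA: "AE \<omega> in M. \<forall>t. (\<lambda>s. kappa s * eps (t - int s) \<omega>) sums y t \<omega>"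
    and eps_meas: "\<And>t. eps t \<in> borel_measurable M"
    and eps_adapted: "\<And>t. eps t \<in> borel_measurable (F t)"
    and eps_int: "\<And>t. integrable M (eps t)"
    and eps_mds: "\<And>t. AE \<omega> in M. real_cond_exp M (F (t - 1)) (eps t) \<omega> = 0"
    \<comment> \<open>(D3)\<close>
    and D3: "\<And>t. AE \<omega> in M. real_cond_exp M (F (t - 1)) (\<lambda>\<omega>. (eps t \<omega>)\<^sup>2) \<omega> = sigma_e\<^sup>2"
    \<comment> \<open>(D4)\<close>
    and D4: "AE \<omega> in M. \<forall>t. \<bar>eps t \<omega>\<bar> \<le> K"
    \<comment> \<open>algorithm parameter and boundedness of theta after a random time\<close>
    and beta: "0 \<le> \<beta>" "\<beta> \<le> 1"
    and kstar_meas: "kstar \<in> measurable M (count_space UNIV)"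
    and Kstar_meas: "Kstar \<in> borel_measurable M"
    and theta_bdd: "AE \<omega> in M. 0 < Kstar \<omega> \<and> Kstar \<omega> < 1 \<and>
                       (\<forall>t\<ge>1. \<bar>theta (t + kstar \<omega>) \<omega>\<bar> \<le> Kstar \<omega>)"
  shows
    \<comment> \<open>(a)\<close>
    "(AE \<omega> in M. Liminf sequentially (\<lambda>t. ereal ((1 / real t) * (\<Sum>s=1..t. (phi s \<omega>)\<^sup>2)))
                    \<ge> ereal (sigma_e\<^sup>2))
     \<and> (\<exists>KK :: 'a \<Rightarrow> real. KK \<in> borel_measurable M \<and>
          (AE \<omega> in M. \<forall>t\<ge>1. inverse ((1 / real t) * (\<Sum>s=1..t. (phi s \<omega>)\<^sup>2)) \<le> KK \<omega>))
     \<and> (AE \<omega> in M. \<exists>B. \<forall>t\<ge>2. inverse (Pbar t \<omega>) \<le> B)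
     \<comment> \<open>(b)\<close>
     \<and> (\<exists>ke kphi kx kz :: nat \<Rightarrow> nat \<Rightarrow> 'a \<Rightarrow> real.
          (\<forall>t\<ge>1. \<forall>j. ke t j \<in> borel_measurable (F (int t - 1)) \<and>
                      kphi t j \<in> borel_measurable (F (int t - 1)) \<and>
                      kx t j \<in> borel_measurable (F (int t - 1)) \<and>
                      kz t j \<in> borel_measurable (F (int t - 1)))
        \<and> (AE \<omega> in M. \<forall>t\<ge>1.
              (\<lambda>j. ke t j \<omega> * eps (int t - int j) \<omega>) sums e t \<omega> \<and>
              (\<lambda>j. kphi t j \<omega> * eps (int t - int j) \<omega>) sums phi t \<omega> \<and>
              (\<lambda>j. kx t j \<omega> * eps (int t - int j) \<omega>) sums x t \<omega> \<and>
              (\<lambda>j. kz t j \<omega> * eps (int t - int j) \<omega>) sums z t \<omega>)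
        \<and> (\<exists>kt :: nat \<Rightarrow> 'a \<Rightarrow> real. (\<forall>j. kt j \<in> borel_measurable M) \<and>
             (AE \<omega> in M. (\<forall>t\<ge>1. \<forall>j. max (max \<bar>ke t j \<omega>\<bar> \<bar>kphi t j \<omega>\<bar>)
                                        (max \<bar>kx t j \<omega>\<bar> \<bar>kz t j \<omega>\<bar>) \<le> kt j \<omega>)
                        \<and> summable (\<lambda>j. kt j \<omega>))))
     \<and> (AE \<omega> in M. \<exists>B. \<forall>t\<ge>1. \<bar>e t \<omega>\<bar> \<le> B \<and> \<bar>phi t \<omega>\<bar> \<le> B \<and> \<bar>x t \<omega>\<bar> \<le> B \<and> \<bar>z t \<omega>\<bar> \<le> B)
     \<comment> \<open>(c)\<close>
     \<and> (AE \<omega> in M. (\<lambda>t. theta (Suc t) \<omega> - theta t \<omega>) \<longlonglongrightarrow> 0)"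
proof -
  interpret stable_recursion M y eps kappa sigma_e K \<beta> kstar Kstar
    using M y_meas D1 kappa0 kappa_abs y_MA eps_adapted eps_mds D3 D4 beta theta_bdd
    unfolding stable_recursion_def stable_recursion_axioms_def F_def theta_def by blast
  show ?thesis
    unfolding F_def theta_def Pbar_def e_def x_def phi_def z_def
    using liminf_avg_phi_sq inverse_avg_phi_sq_bounded inverse_Pbar_bounded ma_coefficients
      processes_bounded theta_increment_tendsto_0
    by (intro conjI)
qed

end
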